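(* Let $P=P(m_1,\dots,m_{n-1})$ be a natural unit interval order with $m_1=r$ for some $r\le n-1$ and $m_2=\cdots=m_{n-1}=n$, and let $G=\mathrm{inc}(P)$. Then $$X_G(\mathbf{x},t)=[n-2]_t!\left([n]_t[r-1]_t\,e_n+t^{r-1}[n-r]_t\,e_{(n-1,1)}\right).$$
   Context: A natural unit interval order $P(m_1,\dots,m_{n-1})$ is defined for integers $m_1\le\cdots\le m_{n-1}\le n$ with $m_i\ge i$: it is the poset on $[n]$ with $i<_P j$ iff $i<n$ and $j\in\{m_i+1,\dots,n\}$. Its incomparability graph has vertex set $[n]$ and an edge $\{i,j\}$ ($i<j$) iff $j\le m_i$. The chromatic quasisymmetric function of a graph $G$ on $V\subset\mathbb{P}$ is $X_G(\mathbf{x},t)=\sum_\kappa t^{\mathrm{asc}(\kappa)}\prod_v x_{\kappa(v)}$ over proper colorings $\kappa:V\to\mathbb{P}$, with $\mathrm{asc}(\kappa)$ the number of edges $\{i,j\}$, $i<j$, with $\kappa(i)<\kappa(j)$. $[m]_t=1+t+\cdots+t^{m-1}$, $[m]_t!=[1]_t\cdots[m]_t$; $e_\lambda$ denotes elementary symmetric functions. *)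

theory Defs
  imports "HOL-Computational_Algebra.Polynomial"
begin

text \<open>Symmetric / quasisymmetric functions in x_1, x_2, ... with coefficients in Z[t]
 are represented by their coefficient function: a monomial x^alpha is given by an
 exponent vector alpha :: nat => nat (finite support, alpha 0 = 0, variables indexed
 by positive integers), and the coefficient is an int poly in t.\<close>

definition monomial_exps :: "(nat \<Rightarrow> nat) set" where
  "monomial_exps = {\<alpha>. finite {i. \<alpha> i \<noteq> 0} \<and> \<alpha> 0 = 0}"

definition qint :: "nat \<Rightarrow> int poly" where
  "qint m = (\<Sum>i<m. monom 1 i)"

definition qfact :: "nat \<Rightarrow> int poly" where
  "qfact m = (\<Prod>i=1..m. qint i)"

text \<open>Graph on vertex set V given by edge predicate E i j (used for i < j).\<close>
definition proper_coloring :: "nat set \<Rightarrow> (nat \<Rightarrow> nat \<Rightarrow> bool) \<Rightarrow> (nat \<Rightarrow> nat) \<Rightarrow> bool" where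
  "proper_coloring V E \<kappa> \<longleftrightarrow>
     (\<forall>v\<in>V. 1 \<le> \<kappa> v) \<and> (\<forall>v. v \<notin> V \<longrightarrow> \<kappa> v = 0) \<and>
     (\<forall>i\<in>V. \<forall>j\<in>V. i < j \<and> E i j \<longrightarrow> \<kappa> i \<noteq> \<kappa> j)"

definition asc :: "nat set \<Rightarrow> (nat \<Rightarrow> nat \<Rightarrow> bool) \<Rightarrow> (nat \<Rightarrow> nat) \<Rightarrow> nat" where
  "asc V E \<kappa> = card {(i,j). i \<in> V \<and> j \<in> V \<and> i < j \<and> E i j \<and> \<kappa> i < \<kappa> j}"

text \<open>Coefficient of x^alpha in the chromatic quasisymmetric function X_G(x,t).\<close>
definition chrom_qsym :: "nat set \<Rightarrow> (nat \<Rightarrow> nat \<Rightarrow> bool) \<Rightarrow> (nat \<Rightarrow> nat) \<Rightarrow> int poly" where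
  "chrom_qsym V E \<alpha> =
     (\<Sum>\<kappa>\<in>{\<kappa>. proper_coloring V E \<kappa> \<and> (\<forall>i\<ge>1. card {v\<in>V. \<kappa> v = i} = \<alpha> i)}.
        monom 1 (asc V E \<kappa>))"

text \<open>Coefficient of x^alpha in e_lambda = e_{lambda_1} ... e_{lambda_k}: the number of
 tuples of sets of positive integers S_1..S_k with |S_k| = lambda_k whose indicator
 vectors sum to alpha.\<close>
definition e_sym :: "nat list \<Rightarrow> (nat \<Rightarrow> nat) \<Rightarrow> int poly" where
  "e_sym lam \<alpha> = of_nat (card {Ss :: nat set list. length Ss = length lam \<and>
      (\<forall>k<length lam. Ss!k \<subseteq> {1..} \<and> finite (Ss!k) \<and> card (Ss!k) = lam!k) \<and>
      (\<forall>i. \<alpha> i = length (filter (\<lambda>S. i \<in> S) Ss))})"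

text \<open>Incomparability graph of the natural unit interval order P(m_1,...,m_{n-1}):
 vertices {1..n}, edge {i,j} (i<j) iff j \<le> m_i.\<close>
definition nuio_edge :: "(nat \<Rightarrow> nat) \<Rightarrow> nat \<Rightarrow> nat \<Rightarrow> bool" where
  "nuio_edge m i j \<longleftrightarrow> i < j \<and> j \<le> m i"

end

theory Submission
  imports Defs
begin

(* The incomparability graph is a clique on 2, ..., n together with vertex 1, whose
   neighbours are 2, ..., r.  A proper colouring is injective on the clique, so its monomial
   is either x_S with n distinct colours, or x_S x_d where vertex 1 repeats the colour d of
   some vertex q > r; all other monomials have coefficient 0.  In both cases the colourings
   are bijections onto a fixed set of colours, and their ascent polynomial is computed by
   deleting the vertex carrying the largest colour: that vertex is an ascent exactly with its
   smaller neighbours, which contributes q-integers and gives a recursion solved by the closed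
   forms below.  Finally e_n and e_(n-1,1) take the values 1 and n on x_S, and 0 and 1 on
   x_S x_d. *)

section \<open>q-integers and ranks\<close>

lemma qint_0 [simp]: "qint 0 = 0"
  by (simp add: qint_def)

lemma qint_Suc_0 [simp]: "qint (Suc 0) = 1"
  by (simp add: qint_def lessThan_Suc)

lemma qint_add: "qint (a + b) = qint a + monom 1 a * qint b"
proof (induction b)
  case 0
  then show ?case by simp
next
  case (Suc b)
  have "qint (a + Suc b) = qint (a + b) + monom 1 (a + b)"
    by (simp add: qint_def)
  also have "\<dots> = qint a + monom 1 a * (qint b + monom 1 b)"
    using Suc by (simp add: mult_monom distrib_left)
  also have "qint b + monom 1 b = qint (Suc b)"
    by (simp add: qint_def)
  finally show ?case .
qed

lemma qint_Suc: "qint (Suc m) = 1 + monom 1 1 * qint m"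
  using qint_add[of 1 m] by simp

lemma qfact_0 [simp]: "qfact 0 = 1"
  by (simp add: qfact_def)

lemma qfact_Suc: "qfact (Suc m) = qfact m * qint (Suc m)"
  by (simp add: qfact_def)

lemma sum_monom_shift:
  "(\<And>x. x \<in> A \<Longrightarrow> f x = c + g x)
    \<Longrightarrow> (\<Sum>x\<in>A. monom 1 (f x)) = monom (1 :: 'a :: comm_semiring_1) c * (\<Sum>x\<in>A. monom 1 (g x))"
  unfolding sum_distrib_left by (rule sum.cong) (simp_all add: mult_monom)

definition rank_in :: "nat set \<Rightarrow> nat \<Rightarrow> nat" where
  "rank_in A p = card {a\<in>A. a < p}"

lemma bij_betw_rank_in:
  assumes "finite A"
  shows "bij_betw (rank_in A) A {..<card A}"
proof -
  have mono: "rank_in A p < rank_in A q" if "p \<in> A" "q \<in> A" "p < q" for p q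
  proof -
    have "{a\<in>A. a < p} \<subset> {a\<in>A. a < q}" using that by auto
    then show ?thesis unfolding rank_in_def by (rule psubset_card_mono[rotated]) (use assms in auto)
  qed
  have inj: "inj_on (rank_in A) A"
    by (rule inj_onI) (metis linorder_neq_iff mono less_irrefl)
  have "rank_in A p < card A" if "p \<in> A" for p
  proof -
    have "{a\<in>A. a < p} \<subset> A" using that by auto
    then show ?thesis using assms unfolding rank_in_def by (rule psubset_card_mono[rotated])
  qed
  then have "rank_in A ` A \<subseteq> {..<card A}" by auto
  moreover have "card (rank_in A ` A) = card {..<card A}"
    using card_image[OF inj] by simp
  ultimately have "rank_in A ` A = {..<card A}"
    by (intro card_subset_eq) auto
  then show ?thesis using inj by (simp add: bij_betw_def)
qed

lemma sum_monom_rank_in: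
  "finite A \<Longrightarrow> (\<Sum>p\<in>A. monom 1 (rank_in A p)) = qint (card A)"
  unfolding qint_def using sum.reindex_bij_betw[OF bij_betw_rank_in, of A "\<lambda>i. monom 1 i"] by simp

lemma sum_monom_rank_in_le:
  assumes "finite W"
  shows "(\<Sum>p\<in>{w\<in>W. w \<le> r}. monom 1 (rank_in W p)) = qint (card {w\<in>W. w \<le> r})"
proof -
  have "rank_in W p = rank_in {w\<in>W. w \<le> r} p" if "p \<in> {w\<in>W. w \<le> r}" for p
    unfolding rank_in_def using that by (intro arg_cong[where f=card]) auto
  then show ?thesis
    using sum_monom_rank_in[of "{w\<in>W. w \<le> r}"] assms by simp
qed

lemma sum_monom_rank_in_gt:
  assumes "finite W"
  shows "(\<Sum>p\<in>{w\<in>W. r < w}. monom 1 (rank_in W p))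
       = monom 1 (card {w\<in>W. w \<le> r}) * qint (card W - card {w\<in>W. w \<le> r})"
proof -
  define L where "L = {w\<in>W. w \<le> r}"
  define H where "H = {w\<in>W. r < w}"
  have fin: "finite L" "finite H" and disj: "L \<inter> H = {}" and WLH: "W = L \<union> H"
    using assms by (auto simp: L_def H_def)
  have "card W = card L + card H"
    unfolding WLH using fin disj by (rule card_Un_disjoint)
  then have cH: "card H = card W - card L" by simp
  have rank_H: "rank_in W p = card L + rank_in H p" if "p \<in> H" for p
  proof -
    have "{a\<in>W. a < p} = L \<union> {a\<in>H. a < p}" and "L \<inter> {a\<in>H. a < p} = {}"
      using that disj by (auto simp: L_def H_def)
    then show ?thesis using fin unfolding rank_in_def by (simp add: card_Un_disjoint)
  qed
  have "(\<Sum>p\<in>H. monom 1 (rank_in W p)) = (monom 1 (card L) :: int poly) * (\<Sum>p\<in>H. monom 1 (rank_in H p))"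
    by (rule sum_monom_shift) (rule rank_H)
  then show ?thesis using fin(2) by (simp add: sum_monom_rank_in cH flip: L_def H_def)
qed

lemma sum_rank_split:
  fixes F :: "nat \<Rightarrow> int poly" and W :: "nat set"
  assumes W: "finite W" and k: "k = card {w\<in>W. w \<le> r}"
  shows "(\<Sum>p\<in>W. monom 1 (rank_in W p + (if p \<le> r then 1 else 0)) * F (if p \<le> r then k - 1 else k))
       = monom 1 1 * qint k * F (k - 1) + monom 1 k * qint (card W - k) * F k"
proof -
  define g where
    "g p = monom 1 (rank_in W p + (if p \<le> r then 1 else 0)) * F (if p \<le> r then k - 1 else k)" for p
  have "W = {w\<in>W. w \<le> r} \<union> {w\<in>W. r < w}" by auto
  then have "(\<Sum>p\<in>W. g p) = (\<Sum>p\<in>{w\<in>W. w \<le> r}. g p) + (\<Sum>p\<in>{w\<in>W. r < w}. g p)"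
    using W by (metis (no_types, lifting) sum.union_disjoint finite_Un disjoint_iff mem_Collect_eq not_le)
  also have "(\<Sum>p\<in>{w\<in>W. w \<le> r}. g p) = monom 1 1 * (\<Sum>p\<in>{w\<in>W. w \<le> r}. monom 1 (rank_in W p)) * F (k - 1)"
    by (simp add: sum_distrib_left sum_distrib_right g_def mult_monom)
  also have "(\<Sum>p\<in>{w\<in>W. r < w}. g p) = (\<Sum>p\<in>{w\<in>W. r < w}. monom 1 (rank_in W p)) * F k"
    by (simp add: sum_distrib_right g_def)
  finally show ?thesis
    unfolding g_def sum_monom_rank_in_le[OF W] sum_monom_rank_in_gt[OF W] k[symmetric] by simp
qed

section \<open>Bijective colourings\<close>

definition bij_colorings :: "nat set \<Rightarrow> nat set \<Rightarrow> (nat \<Rightarrow> nat) set" where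
  "bij_colorings V S = {\<kappa>. bij_betw \<kappa> V S \<and> (\<forall>v. v \<notin> V \<longrightarrow> \<kappa> v = 0)}"

lemma bij_colorings_in: "\<kappa> \<in> bij_colorings V S \<Longrightarrow> v \<in> V \<Longrightarrow> \<kappa> v \<in> S"
  unfolding bij_colorings_def bij_betw_def by auto

lemma bij_colorings_out: "\<kappa> \<in> bij_colorings V S \<Longrightarrow> v \<notin> V \<Longrightarrow> \<kappa> v = 0"
  unfolding bij_colorings_def by auto

lemma bij_colorings_empty: "bij_colorings {} {} = {\<lambda>_. 0}"
  by (auto simp: bij_colorings_def bij_betw_def)

lemma finite_bij_colorings:
  assumes "finite V" "finite S"
  shows "finite (bij_colorings V S)"
proof -
  have "bij_colorings V S \<subseteq> {f. \<forall>x. (x \<in> V \<longrightarrow> f x \<in> S) \<and> (x \<notin> V \<longrightarrow> f x = 0)}"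
    using bij_colorings_in bij_colorings_out by blast
  then show ?thesis using finite_set_of_finite_funs[OF assms] finite_subset by blast
qed

lemma bij_colorings_less_Max:
  assumes "finite S" "\<kappa> \<in> bij_colorings V (S - {Max S})" "v \<in> V"
  shows "\<kappa> v < Max S"
  using bij_colorings_in[OF assms(2,3)] Max_ge[OF assms(1)] by fastforce

lemma bij_colorings_eq_image:
  assumes "M \<in> S"
  defines "h \<equiv> \<lambda>(p, \<kappa>). \<kappa>(p := M)"
  shows "bij_colorings V S = h ` Sigma V (\<lambda>p. bij_colorings (V - {p}) (S - {M}))"
proof (intro equalityI subsetI)
  fix \<kappa> assume \<kappa>: "\<kappa> \<in> bij_colorings V S"
  then have b: "bij_betw \<kappa> V S" by (simp add: bij_colorings_def)
  then obtain p where p: "p \<in> V" "\<kappa> p = M"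
    using assms(1) unfolding bij_betw_def by auto
  have "bij_betw (\<kappa>(p := 0)) (V - {p}) (S - {M})"
    using b p unfolding bij_betw_def inj_on_def by (auto simp: image_iff)
  then have "\<kappa>(p := 0) \<in> bij_colorings (V - {p}) (S - {M})"
    using bij_colorings_out[OF \<kappa>] by (auto simp: bij_colorings_def)
  moreover have "\<kappa> = h (p, \<kappa>(p := 0))" using p by (auto simp: h_def)
  ultimately show "\<kappa> \<in> h ` Sigma V (\<lambda>p. bij_colorings (V - {p}) (S - {M}))"
    using p(1) by blast
next
  fix \<kappa> assume "\<kappa> \<in> h ` Sigma V (\<lambda>p. bij_colorings (V - {p}) (S - {M}))"
  then obtain p \<kappa>' where p: "p \<in> V" and \<kappa>': "\<kappa>' \<in> bij_colorings (V - {p}) (S - {M})"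
    and \<kappa>_eq: "\<kappa> = \<kappa>'(p := M)" by (auto simp: h_def)
  have "bij_betw \<kappa> (insert p (V - {p})) (insert M (S - {M}))"
    using \<kappa>' unfolding \<kappa>_eq bij_colorings_def bij_betw_def inj_on_def by (auto simp: image_iff)
  then have "bij_betw \<kappa> V S" using p assms(1) by (simp add: insert_absorb)
  then show "\<kappa> \<in> bij_colorings V S"
    using bij_colorings_out[OF \<kappa>'] p unfolding \<kappa>_eq by (auto simp: bij_colorings_def)
qed

lemma inj_on_upd_bij_colorings:
  fixes M :: nat
  defines "h \<equiv> \<lambda>(p, \<kappa>). \<kappa>(p := M)"
  shows "inj_on h (Sigma V (\<lambda>p. bij_colorings (V - {p}) (S - {M})))"
proof (rule inj_onI, clarify)
  fix p1 \<kappa>1 p2 \<kappa>2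
  assume p1: "p1 \<in> V" "\<kappa>1 \<in> bij_colorings (V - {p1}) (S - {M})"
    and p2: "p2 \<in> V" "\<kappa>2 \<in> bij_colorings (V - {p2}) (S - {M})"
    and eq: "h (p1, \<kappa>1) = h (p2, \<kappa>2)"
  have eq': "\<kappa>1(p1 := M) = \<kappa>2(p2 := M)" using eq by (simp add: h_def)
  have "p1 = p2"
  proof (rule ccontr)
    assume "p1 \<noteq> p2"
    then have "\<kappa>2 p1 = M" using fun_cong[OF eq', of p1] by simp
    moreover have "\<kappa>2 p1 \<in> S - {M}" using bij_colorings_in[OF p2(2)] p1(1) \<open>p1 \<noteq> p2\<close> by auto
    ultimately show False by simp
  qed
  moreover have "\<kappa>1 = \<kappa>2"
  proof
    fix v show "\<kappa>1 v = \<kappa>2 v"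
      using fun_cong[OF eq', of v] bij_colorings_out[OF p1(2), of p1]
        bij_colorings_out[OF p2(2), of p2] \<open>p1 = p2\<close>
      by (cases "v = p1") auto
  qed
  ultimately show "p1 = p2 \<and> \<kappa>1 = \<kappa>2" by simp
qed

lemma sum_bij_colorings_filter:
  assumes "M \<in> S" "finite V" "finite S"
    and "\<And>p \<kappa>. p \<in> V \<Longrightarrow> \<kappa> \<in> bij_colorings (V - {p}) (S - {M}) \<Longrightarrow> Q (\<kappa>(p := M)) = R p \<kappa>"
  shows "(\<Sum>\<kappa>\<in>{\<kappa>\<in>bij_colorings V S. Q \<kappa>}. f \<kappa>)
       = (\<Sum>p\<in>V. \<Sum>\<kappa>\<in>{\<kappa>\<in>bij_colorings (V - {p}) (S - {M}). R p \<kappa>}. f (\<kappa>(p := M)))"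
proof -
  define h :: "nat \<times> (nat \<Rightarrow> nat) \<Rightarrow> nat \<Rightarrow> nat" where "h = (\<lambda>(p, \<kappa>). \<kappa>(p := M))"
  define G where "G = (\<lambda>p. {\<kappa>\<in>bij_colorings (V - {p}) (S - {M}). R p \<kappa>})"
  have sub: "Sigma V G \<subseteq> Sigma V (\<lambda>p. bij_colorings (V - {p}) (S - {M}))"
    by (auto simp: G_def)
  have inj: "inj_on h (Sigma V G)"
    using inj_on_subset[OF inj_on_upd_bij_colorings sub] unfolding h_def .
  have decomp: "bij_colorings V S = h ` Sigma V (\<lambda>p. bij_colorings (V - {p}) (S - {M}))"
    unfolding h_def by (rule bij_colorings_eq_image[OF assms(1)])
  have img: "{\<kappa>\<in>bij_colorings V S. Q \<kappa>} = h ` Sigma V G"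
  proof (intro equalityI subsetI)
    fix \<kappa> assume "\<kappa> \<in> {\<kappa>\<in>bij_colorings V S. Q \<kappa>}"
    then obtain p \<kappa>' where p: "p \<in> V" "\<kappa>' \<in> bij_colorings (V - {p}) (S - {M})"
      and \<kappa>: "\<kappa> = h (p, \<kappa>')" and "Q \<kappa>"
      unfolding decomp by blast
    then have "R p \<kappa>'" using assms(4) by (simp add: h_def)
    then show "\<kappa> \<in> h ` Sigma V G" using p unfolding \<kappa> G_def by blast
  next
    fix \<kappa> assume "\<kappa> \<in> h ` Sigma V G"
    then obtain p \<kappa>' where p: "p \<in> V" "\<kappa>' \<in> bij_colorings (V - {p}) (S - {M})" "R p \<kappa>'"
      and \<kappa>: "\<kappa> = h (p, \<kappa>')"
      unfolding G_def by blast
    have "Q \<kappa>" using assms(4) p unfolding \<kappa> by (simp add: h_def)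
    moreover have "\<kappa> \<in> bij_colorings V S" using p unfolding decomp \<kappa> by blast
    ultimately show "\<kappa> \<in> {\<kappa>\<in>bij_colorings V S. Q \<kappa>}" by blast
  qed
  have fin: "finite (G p)" for p
    using finite_bij_colorings[of "V - {p}" "S - {M}"] assms(2,3) by (simp add: G_def)
  have "(\<Sum>\<kappa>\<in>{\<kappa>\<in>bij_colorings V S. Q \<kappa>}. f \<kappa>) = (\<Sum>x\<in>Sigma V G. f (h x))"
    unfolding img by (rule sum.reindex[OF inj, unfolded comp_def])
  also have "\<dots> = (\<Sum>p\<in>V. \<Sum>\<kappa>\<in>G p. f (h (p, \<kappa>)))"
    using assms(2) fin by (subst sum.Sigma) auto
  finally show ?thesis by (simp add: G_def h_def)
qed

corollary sum_bij_colorings_Max: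
  assumes "M \<in> S" "finite V" "finite S"
  shows "(\<Sum>\<kappa>\<in>bij_colorings V S. f \<kappa>) = (\<Sum>p\<in>V. \<Sum>\<kappa>\<in>bij_colorings (V - {p}) (S - {M}). f (\<kappa>(p := M)))"
  using sum_bij_colorings_filter[OF assms, of "\<lambda>_. True" "\<lambda>_ _. True" f] by simp

lemma asc_cong: "(\<And>v. v \<in> V \<Longrightarrow> \<kappa> v = \<kappa>' v) \<Longrightarrow> asc V E \<kappa> = asc V E \<kappa>'"
  unfolding asc_def by (rule arg_cong[where f=card]) auto

lemma asc_remove_vertex:
  assumes "finite V" "p \<in> V"
  shows "asc V E \<kappa> = asc (V - {p}) E \<kappa> + card {i\<in>V. i < p \<and> E i p \<and> \<kappa> i < \<kappa> p}
            + card {j\<in>V. p < j \<and> E p j \<and> \<kappa> p < \<kappa> j}"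
proof -
  define A where "A = {(i, j). i \<in> V - {p} \<and> j \<in> V - {p} \<and> i < j \<and> E i j \<and> \<kappa> i < \<kappa> j}"
  define I where "I = {i\<in>V. i < p \<and> E i p \<and> \<kappa> i < \<kappa> p}"
  define J where "J = {j\<in>V. p < j \<and> E p j \<and> \<kappa> p < \<kappa> j}"
  have eq: "{(i, j). i \<in> V \<and> j \<in> V \<and> i < j \<and> E i j \<and> \<kappa> i < \<kappa> j}
        = A \<union> ((\<lambda>i. (i, p)) ` I \<union> (\<lambda>j. (p, j)) ` J)"
    unfolding A_def I_def J_def using assms(2) by auto
  have fA: "finite A" unfolding A_def
    by (rule finite_subset[of _ "V \<times> V"]) (use assms in auto)
  have fIJ: "finite I" "finite J" unfolding I_def J_def using assms by auto
  have "card (A \<union> ((\<lambda>i. (i, p)) ` I \<union> (\<lambda>j. (p, j)) ` J))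
      = card A + card ((\<lambda>i. (i, p)) ` I \<union> (\<lambda>j. (p, j)) ` J)"
    by (rule card_Un_disjoint) (use fA fIJ in \<open>auto simp: A_def\<close>)
  also have "card ((\<lambda>i. (i, p)) ` I \<union> (\<lambda>j. (p, j)) ` J)
      = card ((\<lambda>i. (i, p)) ` I) + card ((\<lambda>j. (p, j)) ` J)"
    by (rule card_Un_disjoint) (use fIJ in \<open>auto simp: I_def J_def\<close>)
  finally have "asc V E \<kappa> = card A + card I + card J"
    unfolding asc_def eq by (simp add: card_image inj_on_def)
  moreover have "asc (V - {p}) E \<kappa> = card A"
    unfolding asc_def A_def by simp
  ultimately show ?thesis unfolding I_def J_def by simp
qed

lemma asc_upd_greatest:
  assumes "finite V" "p \<in> V" "\<forall>i\<in>V - {p}. \<kappa> i < M"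
  shows "asc V E (\<kappa>(p := M)) = asc (V - {p}) E \<kappa> + card {i\<in>V. i < p \<and> E i p}"
proof -
  have c1: "{i\<in>V. i < p \<and> E i p \<and> (\<kappa>(p := M)) i < (\<kappa>(p := M)) p} = {i\<in>V. i < p \<and> E i p}"
    using assms(3) by auto
  have "\<not> (\<kappa>(p := M)) p < (\<kappa>(p := M)) j" if "j \<in> V" for j
  proof (cases "j = p")
    case False
    then have "\<kappa> j < M" using assms(3) that by blast
    then show ?thesis using False by simp
  qed simp
  then have c2: "{j\<in>V. p < j \<and> E p j \<and> (\<kappa>(p := M)) p < (\<kappa>(p := M)) j} = {}"
    by blast
  have c0: "asc (V - {p}) E (\<kappa>(p := M)) = asc (V - {p}) E \<kappa>"
    by (rule asc_cong) auto
  show ?thesis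
    unfolding asc_remove_vertex[OF assms(1,2), of E "\<kappa>(p := M)"] c0 c1 c2 by simp
qed

lemma asc_greatest_first:
  assumes "finite V" "p \<in> V" "\<forall>i\<in>V. i < p \<longrightarrow> \<not> E i p" "\<forall>j\<in>V - {p}. \<kappa> j \<le> \<kappa> p"
  shows "asc V E \<kappa> = asc (V - {p}) E \<kappa>"
proof -
  have "\<not> \<kappa> p < \<kappa> j" if "j \<in> V" "p < j" for j
  proof -
    have "j \<in> V - {p}" using that by auto
    then show ?thesis using assms(4) by (auto simp: not_less)
  qed
  then have after: "{j\<in>V. p < j \<and> E p j \<and> \<kappa> p < \<kappa> j} = {}" by blast
  have before: "{i\<in>V. i < p \<and> E i p \<and> \<kappa> i < \<kappa> p} = {}" using assms(3) by blast
  show ?thesis unfolding asc_remove_vertex[OF assms(1,2), of E \<kappa>] before after by simp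
qed

lemma sum_monom_asc_clique:
  fixes E :: "nat \<Rightarrow> nat \<Rightarrow> bool"
  assumes "finite W" "finite S" "card W = card S" "\<forall>i\<in>W. \<forall>j\<in>W. i < j \<longrightarrow> E i j"
  shows "(\<Sum>\<kappa>\<in>bij_colorings W S. monom 1 (asc W E \<kappa>)) = qfact (card W)"
  using assms
proof (induction "card W" arbitrary: W S)
  case 0
  then have "W = {}" "S = {}" by auto
  then show ?case by (simp add: bij_colorings_empty asc_def)
next
  case (Suc N W S)
  define M where "M = Max S"
  have "S \<noteq> {}" using Suc.hyps(2) Suc.prems(3) by auto
  then have M: "M \<in> S" using Suc.prems(2) by (simp add: M_def)
  have inner: "(\<Sum>\<kappa>\<in>bij_colorings (W - {p}) (S - {M}). monom 1 (asc W E (\<kappa>(p := M))))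
      = monom 1 (rank_in W p) * qfact N" if p: "p \<in> W" for p
  proof -
    have asc_eq: "asc W E (\<kappa>(p := M)) = rank_in W p + asc (W - {p}) E \<kappa>"
      if "\<kappa> \<in> bij_colorings (W - {p}) (S - {M})" for \<kappa>
    proof -
      have "{i\<in>W. i < p \<and> E i p} = {a\<in>W. a < p}" using Suc.prems(4) p by auto
      then show ?thesis
        using asc_upd_greatest[OF Suc.prems(1) p] bij_colorings_less_Max[OF Suc.prems(2)] that
        by (simp add: M_def rank_in_def)
    qed
    have "(\<Sum>\<kappa>\<in>bij_colorings (W - {p}) (S - {M}). monom 1 (asc W E (\<kappa>(p := M))))
        = (monom 1 (rank_in W p) :: int poly)
          * (\<Sum>\<kappa>\<in>bij_colorings (W - {p}) (S - {M}). monom 1 (asc (W - {p}) E \<kappa>))"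
      by (rule sum_monom_shift, rule asc_eq)
    also have "(\<Sum>\<kappa>\<in>bij_colorings (W - {p}) (S - {M}). monom 1 (asc (W - {p}) E \<kappa>)) = qfact N"
    proof -
      have "card (W - {p}) = N" "card (S - {M}) = N"
        using Suc.hyps(2) Suc.prems(1-3) p M by simp_all
      then show ?thesis using Suc.hyps(1)[of "W - {p}" "S - {M}"] Suc.prems(1,2,4) by simp
    qed
    finally show ?thesis .
  qed
  have "(\<Sum>\<kappa>\<in>bij_colorings W S. monom 1 (asc W E \<kappa>)) = (\<Sum>p\<in>W. monom 1 (rank_in W p) * qfact N)"
    unfolding sum_bij_colorings_Max[OF M Suc.prems(1,2), of "\<lambda>\<kappa>. monom 1 (asc W E \<kappa>)"]
    by (rule sum.cong) (simp_all add: inner)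
  also have "\<dots> = qint (card W) * qfact N"
    unfolding sum_distrib_right[symmetric] sum_monom_rank_in[OF Suc.prems(1)] ..
  also have "\<dots> = qfact (card W)"
    by (metis Suc.hyps(2) qfact_Suc mult.commute)
  finally show ?case .
qed

section \<open>Ascent polynomials of the clique with one extra vertex\<close>

text \<open>The incomparability graph of P(r, n, ..., n): a clique on the vertices other than 1,
  and vertex 1 adjacent exactly to 2, ..., r.\<close>
definition clique_plus_edge :: "nat \<Rightarrow> nat \<Rightarrow> nat \<Rightarrow> bool" where
  "clique_plus_edge r i j \<longleftrightarrow> i < j \<and> (i = 1 \<longrightarrow> j \<le> r)"

lemma asc_clique_plus_upd_greatest:
  assumes "finite V" "0 \<notin> V" "1 \<in> V" "p \<in> V" "p \<noteq> 1" "\<forall>i\<in>V - {p}. \<kappa> i < M"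
  shows "asc V (clique_plus_edge r) (\<kappa>(p := M))
       = asc (V - {p}) (clique_plus_edge r) \<kappa> + (rank_in (V - {1}) p + (if p \<le> r then 1 else 0))"
proof -
  have "1 < p" using assms(2,4,5) by (cases p) auto
  then have "{i\<in>V. i < p \<and> clique_plus_edge r i p}
      = (if p \<le> r then insert 1 {a\<in>V - {1}. a < p} else {a\<in>V - {1}. a < p})"
    using assms(3) by (auto simp: clique_plus_edge_def)
  then have "card {i\<in>V. i < p \<and> clique_plus_edge r i p} = rank_in (V - {1}) p + (if p \<le> r then 1 else 0)"
    using assms(1) by (simp add: rank_in_def)
  then show ?thesis using asc_upd_greatest[OF assms(1,4,6)] by simp
qed

lemma asc_clique_plus_greatest_1:
  assumes "finite V" "0 \<notin> V" "1 \<in> V" "\<forall>j\<in>V - {1}. \<kappa> j \<le> \<kappa> 1"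
  shows "asc V (clique_plus_edge r) \<kappa> = asc (V - {1}) (clique_plus_edge r) \<kappa>"
  using assms by (intro asc_greatest_first) (auto simp: less_Suc_eq)

text \<open>The generating polynomial of the colourings with all colours distinct, in the shape in
  which its recursion is easiest to check; N + 1 is the number of vertices and k the degree
  of vertex 1.\<close>
definition gf_distinct :: "nat \<Rightarrow> nat \<Rightarrow> int poly" where
  "gf_distinct N k = of_nat (N + 1) * qfact N - qfact (N - 1) * qint k * (of_nat (N + 1) - qint (N + 1))"

lemma gf_distinct_0: "gf_distinct 0 k = 1"
  by (simp add: gf_distinct_def)

lemma gf_distinct_rec:
  assumes "1 \<le> N" "k \<le> N"
  shows "gf_distinct N k = qfact N + monom 1 1 * qint k * gf_distinct (N - 1) (k - 1)
                         + monom 1 k * qint (N - k) * gf_distinct (N - 1) k"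
proof (cases "N = 1")
  case True
  then have "k = 0 \<or> k = 1" using assms by auto
  moreover have "qint (Suc (Suc 0)) = 1 + monom 1 1" using qint_Suc[of 1] by simp
  ultimately show ?thesis using True by (auto simp: gf_distinct_def qfact_def)
next
  case False
  define m where "m = N - 2"
  have N: "N = m + 2" using assms False by (simp add: m_def)
  define X :: "int poly" where "X = monom 1 1"
  define F where "F = qfact m"
  define a where "a = qint (Suc m)"
  define b where "b = qint (Suc (Suc m))"
  define c where "c = qint (Suc (Suc (Suc m)))"
  define M :: "int poly" where "M = of_nat m"
  have b: "b = 1 + X * a" and c: "c = 1 + X * b"
    by (simp_all add: a_def b_def c_def X_def qint_Suc)
  have top: "gf_distinct N j = (M + 3) * (F * a * b) - F * a * qint j * ((M + 3) - c)" for j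
    by (simp add: gf_distinct_def N F_def a_def b_def c_def M_def qfact_Suc add.commute)
  have below: "gf_distinct (N - 1) j = (M + 2) * (F * a) - F * qint j * ((M + 2) - b)" for j
    by (simp add: gf_distinct_def N F_def a_def b_def M_def qfact_Suc add.commute)
  have qfN: "qfact N = F * a * b"
    by (simp add: N F_def a_def b_def qfact_Suc)
  show ?thesis
  proof (cases k)
    case 0
    have Z: "monom 1 k * qint (N - k) = b" by (simp add: 0 N b_def)
    show ?thesis unfolding Z top below qfN by (simp add: 0 b c algebra_simps)
  next
    case (Suc j)
    have Kk: "qint k = 1 + X * qint j" by (simp add: Suc X_def qint_Suc)
    have Z: "monom 1 k * qint (N - k) = b - (1 + X * qint j)"
      using qint_add[of k "N - k"] assms Kk by (simp add: b_def N)
    show ?thesis unfolding Z top below qfN Kk X_def[symmetric]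
      by (simp add: Suc b c algebra_simps)
  qed
qed

lemma sum_monom_asc_clique_plus_Max_at_1:
  assumes "finite V" "0 \<notin> V" "1 \<in> V" "finite S" "card S = card V" "S \<noteq> {}"
  shows "(\<Sum>\<kappa>\<in>bij_colorings (V - {1}) (S - {Max S}). monom 1 (asc V (clique_plus_edge r) (\<kappa>(1 := Max S))))
       = qfact (card V - 1)"
proof -
  have "asc V (clique_plus_edge r) (\<kappa>(1 := Max S)) = asc (V - {1}) (clique_plus_edge r) \<kappa>"
    if \<kappa>: "\<kappa> \<in> bij_colorings (V - {1}) (S - {Max S})" for \<kappa>
  proof -
    have "asc V (clique_plus_edge r) (\<kappa>(1 := Max S)) = asc (V - {1}) (clique_plus_edge r) (\<kappa>(1 := Max S))"
      using assms(1-3) bij_colorings_less_Max[OF assms(4) \<kappa>]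
      by (intro asc_clique_plus_greatest_1) (auto simp: less_imp_le)
    also have "\<dots> = asc (V - {1}) (clique_plus_edge r) \<kappa>" by (rule asc_cong) simp
    finally show ?thesis .
  qed
  moreover have "(\<Sum>\<kappa>\<in>bij_colorings (V - {1}) (S - {Max S}). monom 1 (asc (V - {1}) (clique_plus_edge r) \<kappa>))
      = qfact (card V - 1)"
    using sum_monom_asc_clique[of "V - {1}" "S - {Max S}" "clique_plus_edge r"] assms Max_in[OF assms(4,6)]
    by (simp add: clique_plus_edge_def)
  ultimately show ?thesis by simp
qed

lemma sum_monom_asc_clique_plus_distinct:
  assumes "finite V" "0 \<notin> V" "1 \<in> V" "finite S" "card S = card V"
  shows "(\<Sum>\<kappa>\<in>bij_colorings V S. monom 1 (asc V (clique_plus_edge r) \<kappa>))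
       = gf_distinct (card V - 1) (card {w\<in>V - {1}. w \<le> r})"
  using assms
proof (induction "card V" arbitrary: V S rule: less_induct)
  case less
  define W where "W = V - {1}"
  define N where "N = card V - 1"
  define k where "k = card {w\<in>W. w \<le> r}"
  have fW: "finite W" and cW: "card W = N"
    using less.prems(1,3) by (simp_all add: W_def N_def)
  have kN: "k \<le> N" unfolding k_def cW[symmetric] by (rule card_mono[OF fW]) auto
  define M where "M = Max S"
  have V_pos: "card V > 0" using less.prems(1,3) card_gt_0_iff by blast
  then have "S \<noteq> {}" using less.prems(5) by auto
  then have M: "M \<in> S" using less.prems(4) by (simp add: M_def)
  have less_M: "\<forall>i\<in>U. \<kappa> i < M" if "\<kappa> \<in> bij_colorings U (S - {M})" for \<kappa> U
    using bij_colorings_less_Max[OF less.prems(4)] that by (simp add: M_def)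
  have at_1: "(\<Sum>\<kappa>\<in>bij_colorings W (S - {M}). monom 1 (asc V (clique_plus_edge r) (\<kappa>(1 := M))))
      = qfact N"
    using sum_monom_asc_clique_plus_Max_at_1[OF less.prems(1-5)] \<open>S \<noteq> {}\<close>
    by (simp add: W_def N_def M_def)
  have at_p: "(\<Sum>\<kappa>\<in>bij_colorings (V - {p}) (S - {M}). monom 1 (asc V (clique_plus_edge r) (\<kappa>(p := M))))
      = monom 1 (rank_in W p + (if p \<le> r then 1 else 0)) * gf_distinct (N - 1) (if p \<le> r then k - 1 else k)"
    if p: "p \<in> W" for p
  proof -
    have pV: "p \<in> V" "p \<noteq> 1" using p by (auto simp: W_def)
    have "(\<Sum>\<kappa>\<in>bij_colorings (V - {p}) (S - {M}). monom 1 (asc (V - {p}) (clique_plus_edge r) \<kappa>))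
        = gf_distinct (card (V - {p}) - 1) (card {w\<in>V - {p} - {1}. w \<le> r})"
      using less.prems pV M V_pos by (intro less.hyps) auto
    moreover have "card (V - {p}) - 1 = N - 1" using pV less.prems(1) by (simp add: N_def)
    moreover have "card {w\<in>V - {p} - {1}. w \<le> r} = (if p \<le> r then k - 1 else k)"
    proof -
      have "{w\<in>V - {p} - {1}. w \<le> r} = {w\<in>W. w \<le> r} - {p}" by (auto simp: W_def)
      then show ?thesis using fW p by (simp add: k_def)
    qed
    moreover have "(\<Sum>\<kappa>\<in>bij_colorings (V - {p}) (S - {M}). monom 1 (asc V (clique_plus_edge r) (\<kappa>(p := M))))
        = (monom 1 (rank_in W p + (if p \<le> r then 1 else 0)) :: int poly)
          * (\<Sum>\<kappa>\<in>bij_colorings (V - {p}) (S - {M}). monom 1 (asc (V - {p}) (clique_plus_edge r) \<kappa>))"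
    proof (rule sum_monom_shift)
      fix \<kappa> assume "\<kappa> \<in> bij_colorings (V - {p}) (S - {M})"
      then show "asc V (clique_plus_edge r) (\<kappa>(p := M))
          = (rank_in W p + (if p \<le> r then 1 else 0)) + asc (V - {p}) (clique_plus_edge r) \<kappa>"
        using asc_clique_plus_upd_greatest[OF less.prems(1-3) pV] less_M by (simp add: W_def)
    qed
    ultimately show ?thesis by simp
  qed
  have "(\<Sum>\<kappa>\<in>bij_colorings V S. monom 1 (asc V (clique_plus_edge r) \<kappa>))
      = qfact N + (\<Sum>p\<in>W. monom 1 (rank_in W p + (if p \<le> r then 1 else 0))
                              * gf_distinct (N - 1) (if p \<le> r then k - 1 else k))"
    unfolding sum_bij_colorings_Max[OF M less.prems(1,4), of "\<lambda>\<kappa>. monom 1 (asc V (clique_plus_edge r) \<kappa>)"]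
      sum.remove[OF less.prems(1,3)] W_def[symmetric] at_1
    by (simp add: at_p)
  also have "\<dots> = gf_distinct N k"
  proof (cases "N = 0")
    case True
    then show ?thesis using kN fW cW by (simp add: gf_distinct_0)
  next
    case False
    then show ?thesis using gf_distinct_rec[of N k] kN sum_rank_split[OF fW k_def] cW by simp
  qed
  finally show ?case by (simp add: N_def k_def W_def)
qed

definition gf_repeat :: "nat \<Rightarrow> nat \<Rightarrow> int poly" where
  "gf_repeat N k = qfact (N - 1) * monom 1 k * qint (N - k)"

lemma gf_repeat_rec:
  assumes "2 \<le> N" "k \<le> N"
  shows "gf_repeat N k = monom 1 1 * qint k * gf_repeat (N - 1) (k - 1)
                       + monom 1 k * qint (N - k) * gf_repeat (N - 1) k"
proof -
  define m where "m = N - 2"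
  have N: "N = Suc (Suc m)" using assms(1) by (simp add: m_def)
  show ?thesis
  proof (cases k)
    case 0
    then show ?thesis by (simp add: gf_repeat_def N qfact_Suc algebra_simps)
  next
    case (Suc j)
    show ?thesis
    proof (cases "j \<le> m")
      case True
      have split: "qint (Suc m) = qint (Suc j) + monom 1 (Suc j) * qint (m - j)"
        using qint_add[of "Suc j" "m - j"] True by simp
      have t: "monom 1 (Suc j) = (monom 1 1 * monom 1 j :: int poly)"
        by (simp add: mult_monom)
      have "gf_repeat N k = qfact m * qint (Suc m) * monom 1 (Suc j) * qint (Suc m - j)"
        and "gf_repeat (N - 1) (k - 1) = qfact m * monom 1 j * qint (Suc m - j)"
        and "gf_repeat (N - 1) k = qfact m * monom 1 (Suc j) * qint (m - j)"
        and "monom 1 k * qint (N - k) = monom 1 (Suc j) * qint (Suc m - j)"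
        by (simp_all add: gf_repeat_def N Suc qfact_Suc ac_simps)
      then show ?thesis unfolding split t Suc by (simp add: algebra_simps)
    next
      case False
      then have "k = N" using assms(2) Suc N by simp
      then show ?thesis by (simp add: gf_repeat_def N)
    qed
  qed
qed

lemma sum_monom_asc_clique_plus_repeat_Max:
  assumes "finite W" "0 \<notin> W" "1 \<notin> W" "finite S" "card S = card W" "S \<noteq> {}"
  shows "(\<Sum>\<kappa>\<in>{\<kappa>\<in>bij_colorings W S. \<forall>q\<in>W. \<kappa> q = Max S \<longrightarrow> r < q}.
            monom 1 (asc (insert 1 W) (clique_plus_edge r) (\<kappa>(1 := Max S))))
       = gf_repeat (card W) (card {w\<in>W. w \<le> r})"
proof -
  define V where "V = insert 1 W"
  define N where "N = card W"
  define k where "k = card {w\<in>W. w \<le> r}"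
  define M where "M = Max S"
  note fW = assms(1)
  have V: "finite V" "0 \<notin> V" "1 \<in> V" "V - {1} = W"
    using assms(1-3) by (auto simp: V_def)
  have M: "M \<in> S" unfolding M_def using assms(4,6) by (rule Max_in)
  have less_M: "\<forall>i\<in>U. \<kappa> i < M" if "\<kappa> \<in> bij_colorings U (S - {M})" for \<kappa> U
    using bij_colorings_less_Max[OF assms(4)] that by (simp add: M_def)
  have edge_W: "clique_plus_edge r i j \<longleftrightarrow> i < j" if "i \<in> W" for i j
    using that assms(3) by (auto simp: clique_plus_edge_def)
  have at_p: "(\<Sum>\<kappa>\<in>bij_colorings (W - {p}) (S - {M}). monom 1 (asc V (clique_plus_edge r) (\<kappa>(p := M, 1 := M))))
      = monom 1 (rank_in W p) * qfact (N - 1)" if p: "p \<in> W" for p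
  proof -
    have asc_eq: "asc V (clique_plus_edge r) (\<kappa>(p := M, 1 := M))
        = rank_in W p + asc (W - {p}) (clique_plus_edge r) \<kappa>"
      if \<kappa>: "\<kappa> \<in> bij_colorings (W - {p}) (S - {M})" for \<kappa>
    proof -
      have "asc V (clique_plus_edge r) (\<kappa>(p := M, 1 := M)) = asc W (clique_plus_edge r) (\<kappa>(p := M, 1 := M))"
        using asc_clique_plus_greatest_1[OF V(1-3)] less_M[OF \<kappa>] V(4)
        by (simp add: less_imp_le)
      also have "\<dots> = asc W (clique_plus_edge r) (\<kappa>(p := M))"
        using assms(3) by (intro asc_cong) auto
      also have "\<dots> = asc (W - {p}) (clique_plus_edge r) \<kappa> + card {i\<in>W. i < p \<and> clique_plus_edge r i p}"
        using asc_upd_greatest[OF fW p] less_M[OF \<kappa>] by blast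
      also have "{i\<in>W. i < p \<and> clique_plus_edge r i p} = {a\<in>W. a < p}"
        using edge_W by auto
      finally show ?thesis unfolding rank_in_def by linarith
    qed
    have "card (W - {p}) = N - 1" "card (S - {M}) = N - 1"
      using assms(1,4,5) p M by (simp_all add: N_def)
    then have "(\<Sum>\<kappa>\<in>bij_colorings (W - {p}) (S - {M}). monom 1 (asc (W - {p}) (clique_plus_edge r) \<kappa>))
        = qfact (N - 1)"
      using sum_monom_asc_clique[of "W - {p}" "S - {M}"] assms(1,4) edge_W by simp
    moreover have "(\<Sum>\<kappa>\<in>bij_colorings (W - {p}) (S - {M}). monom 1 (asc V (clique_plus_edge r) (\<kappa>(p := M, 1 := M))))
        = (monom 1 (rank_in W p) :: int poly)
          * (\<Sum>\<kappa>\<in>bij_colorings (W - {p}) (S - {M}). monom 1 (asc (W - {p}) (clique_plus_edge r) \<kappa>))"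
      by (rule sum_monom_shift, rule asc_eq)
    ultimately show ?thesis by simp
  qed
  have "(\<Sum>\<kappa>\<in>{\<kappa>\<in>bij_colorings W S. \<forall>q\<in>W. \<kappa> q = M \<longrightarrow> r < q}. monom 1 (asc V (clique_plus_edge r) (\<kappa>(1 := M))))
      = (\<Sum>p\<in>W. \<Sum>\<kappa>\<in>{\<kappa>\<in>bij_colorings (W - {p}) (S - {M}). r < p}.
           monom 1 (asc V (clique_plus_edge r) (\<kappa>(p := M, 1 := M))))"
  proof (rule sum_bij_colorings_filter[OF M fW assms(4)])
    fix p \<kappa> assume "p \<in> W" "\<kappa> \<in> bij_colorings (W - {p}) (S - {M})"
    then show "(\<forall>q\<in>W. (\<kappa>(p := M)) q = M \<longrightarrow> r < q) = (r < p)"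
      using bij_colorings_in by fastforce
  qed
  also have "\<dots> = (\<Sum>p\<in>W. if r < p then monom 1 (rank_in W p) * qfact (N - 1) else 0)"
  proof (rule sum.cong[OF refl])
    fix p assume "p \<in> W"
    then show "(\<Sum>\<kappa>\<in>{\<kappa>\<in>bij_colorings (W - {p}) (S - {M}). r < p}.
          monom 1 (asc V (clique_plus_edge r) (\<kappa>(p := M, 1 := M))))
        = (if r < p then monom 1 (rank_in W p) * qfact (N - 1) else 0)"
      using at_p by (cases "r < p") simp_all
  qed
  also have "\<dots> = (\<Sum>p\<in>{w\<in>W. r < w}. monom 1 (rank_in W p) * qfact (N - 1))"
    using fW by (rule sum.inter_filter[symmetric])
  also have "\<dots> = gf_repeat N k"
    using fW by (simp add: sum_distrib_right[symmetric] sum_monom_rank_in_gt gf_repeat_def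
        k_def N_def mult_ac)
  finally show ?thesis by (simp add: V_def N_def k_def M_def)
qed

text \<open>The colourings in which vertex 1 shares its colour d with a vertex q > r (the
  non-neighbours of 1), parametrised by their restriction to the clique W.\<close>
lemma sum_monom_asc_clique_plus_repeat:
  assumes "finite W" "0 \<notin> W" "1 \<notin> W" "finite S" "card S = card W" "d \<in> S"
  shows "(\<Sum>\<kappa>\<in>{\<kappa>\<in>bij_colorings W S. \<forall>q\<in>W. \<kappa> q = d \<longrightarrow> r < q}.
            monom 1 (asc (insert 1 W) (clique_plus_edge r) (\<kappa>(1 := d))))
       = gf_repeat (card W) (card {w\<in>W. w \<le> r})"
  using assms
proof (induction "card W" arbitrary: W S rule: less_induct)
  case less
  define V where "V = insert 1 W"
  define N where "N = card W"
  define k where "k = card {w\<in>W. w \<le> r}"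
  define M where "M = Max S"
  note fW = less.prems(1)
  have V: "finite V" "0 \<notin> V" "1 \<in> V" "V - {1} = W"
    using less.prems(1-3) by (auto simp: V_def)
  have M: "M \<in> S" unfolding M_def using less.prems(4,6) by (intro Max_in) auto
  have less_M: "\<forall>i\<in>U. \<kappa> i < M" if "\<kappa> \<in> bij_colorings U (S - {M})" for \<kappa> U
    using bij_colorings_less_Max[OF less.prems(4)] that by (simp add: M_def)
  have kN: "k \<le> N" unfolding k_def N_def by (rule card_mono[OF fW]) auto
  show ?case
  proof (cases "d = M")
    case True
    then show ?thesis
      using sum_monom_asc_clique_plus_repeat_Max[OF less.prems(1-5)] less.prems(6) by (auto simp: M_def)
  next
    case False
    have "d < M" using False less.prems(4,6) by (simp add: M_def order.not_eq_order_implies_strict)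
    have "card {d, M} \<le> card S" using M less.prems(4,6) by (intro card_mono) auto
    then have N2: "2 \<le> N" using False less.prems(5) by (simp add: N_def)
    have at_p: "(\<Sum>\<kappa>\<in>{\<kappa>\<in>bij_colorings (W - {p}) (S - {M}). \<forall>q\<in>W - {p}. \<kappa> q = d \<longrightarrow> r < q}.
           monom 1 (asc V (clique_plus_edge r) (\<kappa>(p := M, 1 := d))))
        = monom 1 (rank_in W p + (if p \<le> r then 1 else 0)) * gf_repeat (N - 1) (if p \<le> r then k - 1 else k)"
      if p: "p \<in> W" for p
    proof -
      have pV: "p \<in> V" "p \<noteq> 1" using p less.prems(3) by (auto simp: V_def)
      have asc_eq: "asc V (clique_plus_edge r) (\<kappa>(p := M, 1 := d))
          = (rank_in W p + (if p \<le> r then 1 else 0)) + asc (insert 1 (W - {p})) (clique_plus_edge r) (\<kappa>(1 := d))"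
        if \<kappa>: "\<kappa> \<in> bij_colorings (W - {p}) (S - {M})" for \<kappa>
      proof -
        have "\<forall>i\<in>V - {p}. (\<kappa>(1 := d)) i < M"
          using less_M[OF \<kappa>] \<open>d < M\<close> by (auto simp: V_def)
        moreover have "\<kappa>(p := M, 1 := d) = \<kappa>(1 := d, p := M)" using pV(2) by (rule fun_upd_twist)
        moreover have "V - {p} = insert 1 (W - {p})" using pV(2) by (auto simp: V_def)
        ultimately show ?thesis
          using asc_clique_plus_upd_greatest[OF V(1-3) pV] V(4) by simp
      qed
      have "(\<Sum>\<kappa>\<in>{\<kappa>\<in>bij_colorings (W - {p}) (S - {M}). \<forall>q\<in>W - {p}. \<kappa> q = d \<longrightarrow> r < q}.
             monom 1 (asc (insert 1 (W - {p})) (clique_plus_edge r) (\<kappa>(1 := d))))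
          = gf_repeat (card (W - {p})) (card {w\<in>W - {p}. w \<le> r})"
        using less.prems p M False card_gt_0_iff[of W] by (intro less.hyps) auto
      moreover have "card (W - {p}) = N - 1" using p fW by (simp add: N_def)
      moreover have "card {w\<in>W - {p}. w \<le> r} = (if p \<le> r then k - 1 else k)"
      proof -
        have "{w\<in>W - {p}. w \<le> r} = {w\<in>W. w \<le> r} - {p}" by auto
        then show ?thesis using fW p by (simp add: k_def)
      qed
      moreover have "(\<Sum>\<kappa>\<in>{\<kappa>\<in>bij_colorings (W - {p}) (S - {M}). \<forall>q\<in>W - {p}. \<kappa> q = d \<longrightarrow> r < q}.
             monom 1 (asc V (clique_plus_edge r) (\<kappa>(p := M, 1 := d))))
          = (monom 1 (rank_in W p + (if p \<le> r then 1 else 0)) :: int poly)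
            * (\<Sum>\<kappa>\<in>{\<kappa>\<in>bij_colorings (W - {p}) (S - {M}). \<forall>q\<in>W - {p}. \<kappa> q = d \<longrightarrow> r < q}.
                monom 1 (asc (insert 1 (W - {p})) (clique_plus_edge r) (\<kappa>(1 := d))))"
        by (rule sum_monom_shift, rule asc_eq) simp
      ultimately show ?thesis by simp
    qed
    have "(\<Sum>\<kappa>\<in>{\<kappa>\<in>bij_colorings W S. \<forall>q\<in>W. \<kappa> q = d \<longrightarrow> r < q}. monom 1 (asc V (clique_plus_edge r) (\<kappa>(1 := d))))
        = (\<Sum>p\<in>W. \<Sum>\<kappa>\<in>{\<kappa>\<in>bij_colorings (W - {p}) (S - {M}). \<forall>q\<in>W - {p}. \<kappa> q = d \<longrightarrow> r < q}.
             monom 1 (asc V (clique_plus_edge r) (\<kappa>(p := M, 1 := d))))"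
    proof (rule sum_bij_colorings_filter[OF M fW less.prems(4)])
      fix p \<kappa> assume "p \<in> W" "\<kappa> \<in> bij_colorings (W - {p}) (S - {M})"
      then show "(\<forall>q\<in>W. (\<kappa>(p := M)) q = d \<longrightarrow> r < q) = (\<forall>q\<in>W - {p}. \<kappa> q = d \<longrightarrow> r < q)"
        using False by auto
    qed
    also have "\<dots> = (\<Sum>p\<in>W. monom 1 (rank_in W p + (if p \<le> r then 1 else 0))
                              * gf_repeat (N - 1) (if p \<le> r then k - 1 else k))"
      by (rule sum.cong[OF refl], rule at_p)
    also have "\<dots> = gf_repeat N k"
      using gf_repeat_rec[OF N2 kN] sum_rank_split[OF fW k_def] by (simp add: N_def)
    finally show ?thesis by (simp add: V_def N_def k_def)
  qed
qed

section \<open>Exponent vectors and elementary symmetric functions\<close>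

lemma chrom_qsym_cong:
  assumes "\<forall>i\<in>V. \<forall>j\<in>V. i<j \<longrightarrow> (E1 i j \<longleftrightarrow> E2 i j)"
  shows "chrom_qsym V E1 \<alpha> = chrom_qsym V E2 \<alpha>"
proof -
  have p: "proper_coloring V E1 \<kappa> = proper_coloring V E2 \<kappa>" for \<kappa>
    unfolding proper_coloring_def using assms by blast
  have a: "asc V E1 \<kappa> = asc V E2 \<kappa>" for \<kappa>
    unfolding asc_def by (rule arg_cong[where f=card]) (use assms in blast)
  show ?thesis unfolding chrom_qsym_def p a ..
qed

lemma card_fiber_inj_on:
  assumes "inj_on \<kappa> W"
  shows "card {w\<in>W. \<kappa> w = i} = (if i \<in> \<kappa> ` W then 1 else 0)"
proof (cases "i \<in> \<kappa> ` W")
  case True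
  then obtain w where w: "w \<in> W" "\<kappa> w = i" by auto
  then have "{w\<in>W. \<kappa> w = i} = {w}" using assms by (auto simp: inj_on_def)
  then show ?thesis using True by simp
next
  case False
  then have e: "{w\<in>W. \<kappa> w = i} = {}" by auto
  show ?thesis unfolding e using False by simp
qed

text \<open>The exponent vectors of x_S (|S| = n) and of x_S x_d (|S| = n - 1, d in S): the monomials
  of e_n, and those of e_(n-1,1) not occurring in e_n.\<close>
definition exps_distinct :: "nat \<Rightarrow> nat set \<Rightarrow> (nat \<Rightarrow> nat) \<Rightarrow> bool" where
  "exps_distinct n S \<alpha> \<longleftrightarrow> finite S \<and> 0 \<notin> S \<and> card S = n \<and> (\<forall>i. \<alpha> i = (if i \<in> S then 1 else 0))"

definition exps_repeat :: "nat \<Rightarrow> nat set \<Rightarrow> nat \<Rightarrow> (nat \<Rightarrow> nat) \<Rightarrow> bool" where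
  "exps_repeat n S d \<alpha> \<longleftrightarrow> finite S \<and> 0 \<notin> S \<and> card S = n - 1 \<and> d \<in> S \<and>
     (\<forall>i. \<alpha> i = (if i \<in> S then 1 else 0) + (if i = d then 1 else 0))"

lemma exps_distinct_unique: "exps_distinct n S \<alpha> \<Longrightarrow> S = {i. \<alpha> i \<noteq> 0}"
  unfolding exps_distinct_def by auto

lemma mem_zero_free_pos: "x \<in> T \<Longrightarrow> 0 \<notin> T \<Longrightarrow> 0 < (x::nat)"
  by (cases x) auto

lemma subset_atLeast_1_iff: "(T \<subseteq> {Suc 0..}) = (0 \<notin> T)"
proof
  assume "T \<subseteq> {Suc 0..}" then show "0 \<notin> T" by auto
next
  assume h: "0 \<notin> T"
  show "T \<subseteq> {Suc 0..}"
  proof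
    fix x assume x: "x \<in> T"
    have "x \<noteq> 0"
    proof
      assume "x = 0" then show False using x h by simp
    qed
    then show "x \<in> {Suc 0..}" by simp
  qed
qed

lemma e_sym_single_set: "{Ss :: nat set list. length Ss = length [n] \<and>
      (\<forall>k<length [n]. Ss!k \<subseteq> {1..} \<and> finite (Ss!k) \<and> card (Ss!k) = [n]!k) \<and>
      (\<forall>i. \<alpha> i = length (filter (\<lambda>S. i \<in> S) Ss))}
    = (\<lambda>T. [T]) ` {T. exps_distinct n T \<alpha>}"
proof (rule set_eqI, rule iffI)
  fix Ss assume H: "Ss \<in> {Ss :: nat set list. length Ss = length [n] \<and>
      (\<forall>k<length [n]. Ss!k \<subseteq> {1..} \<and> finite (Ss!k) \<and> card (Ss!k) = [n]!k) \<and>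
      (\<forall>i. \<alpha> i = length (filter (\<lambda>S. i \<in> S) Ss))}"
  then obtain T where T: "Ss = [T]" by (auto simp: length_Suc_conv)
  then have "exps_distinct n T \<alpha>" using H by (auto simp: exps_distinct_def subset_atLeast_1_iff)
  then show "Ss \<in> (\<lambda>T. [T]) ` {T. exps_distinct n T \<alpha>}" using T by auto
next
  fix Ss assume "Ss \<in> (\<lambda>T. [T]) ` {T. exps_distinct n T \<alpha>}"
  then obtain T where T: "Ss = [T]" "exps_distinct n T \<alpha>" by auto
  then show "Ss \<in> {Ss :: nat set list. length Ss = length [n] \<and>
      (\<forall>k<length [n]. Ss!k \<subseteq> {1..} \<and> finite (Ss!k) \<and> card (Ss!k) = [n]!k) \<and>
      (\<forall>i. \<alpha> i = length (filter (\<lambda>S. i \<in> S) Ss))}"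
    by (auto simp: exps_distinct_def subset_atLeast_1_iff)
qed

lemma e_sym_single: "e_sym [n] \<alpha> = (if \<exists>S. exps_distinct n S \<alpha> then 1 else 0)"
proof -
  have "e_sym [n] \<alpha> = of_nat (card ((\<lambda>T. [T]) ` {T. exps_distinct n T \<alpha>}))"
    unfolding e_sym_def e_sym_single_set ..
  also have "card ((\<lambda>T. [T]) ` {T. exps_distinct n T \<alpha>}) = card {T. exps_distinct n T \<alpha>}"
    by (rule card_image) (auto simp: inj_on_def)
  also have "card {T. exps_distinct n T \<alpha>} = (if \<exists>S. exps_distinct n S \<alpha> then 1 else 0)"
  proof (cases "\<exists>S. exps_distinct n S \<alpha>")
    case True
    then obtain S where S: "exps_distinct n S \<alpha>" by auto
    then have "{T. exps_distinct n T \<alpha>} = {S}" using exps_distinct_unique by blast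
    then show ?thesis using True by simp
  next
    case False
    then show ?thesis by simp
  qed
  finally show ?thesis by simp
qed

definition hook_fillings :: "nat \<Rightarrow> (nat \<Rightarrow> nat) \<Rightarrow> nat set list set" where
  "hook_fillings n \<alpha> = {Ss :: nat set list. length Ss = length [n - 1, 1] \<and>
      (\<forall>k<length [n - 1, 1]. Ss!k \<subseteq> {1..} \<and> finite (Ss!k) \<and> card (Ss!k) = [n - 1, 1]!k) \<and>
      (\<forall>i. \<alpha> i = length (filter (\<lambda>S. i \<in> S) Ss))}"

lemma hook_fillings_iff: "Ss \<in> hook_fillings n \<alpha> \<longleftrightarrow> (\<exists>T1 s. Ss = [T1, {s}] \<and> finite T1 \<and> 0 \<notin> T1 \<and> s \<noteq> 0 \<and> card T1 = n - 1 \<and>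
     (\<forall>i. \<alpha> i = (if i \<in> T1 then 1 else 0) + (if i = s then 1 else 0)))"
proof
  assume H: "Ss \<in> hook_fillings n \<alpha>"
  then obtain T1 T2 where T: "Ss = [T1, T2]" by (auto simp: hook_fillings_def length_Suc_conv)
  have H': "finite T1" "0 \<notin> T1" "card T1 = n - 1" "finite T2" "0 \<notin> T2" "card T2 = 1"
    "\<forall>i. \<alpha> i = (if i \<in> T1 then 1 else 0) + (if i \<in> T2 then 1 else 0)"
    using H T by (auto simp: hook_fillings_def subset_atLeast_1_iff less_Suc_eq)
  then obtain s where s: "T2 = {s}" by (auto simp: card_Suc_eq)
  show "\<exists>T1 s. Ss = [T1, {s}] \<and> finite T1 \<and> 0 \<notin> T1 \<and> s \<noteq> 0 \<and> card T1 = n - 1 \<and>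
     (\<forall>i. \<alpha> i = (if i \<in> T1 then 1 else 0) + (if i = s then 1 else 0))"
    using H' T s by (intro exI[of _ T1] exI[of _ s]) auto
next
  assume "\<exists>T1 s. Ss = [T1, {s}] \<and> finite T1 \<and> 0 \<notin> T1 \<and> s \<noteq> 0 \<and> card T1 = n - 1 \<and>
     (\<forall>i. \<alpha> i = (if i \<in> T1 then 1 else 0) + (if i = s then 1 else 0))"
  then obtain T1 s where H: "Ss = [T1, {s}]" "finite T1" "0 \<notin> T1" "s \<noteq> 0" "card T1 = n - 1"
     "\<forall>i. \<alpha> i = (if i \<in> T1 then 1 else 0) + (if i = s then 1 else 0)" by blast
  then show "Ss \<in> hook_fillings n \<alpha>" by (auto simp: hook_fillings_def subset_atLeast_1_iff less_Suc_eq)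
qed

lemma e_sym_hook_card: "e_sym [n - 1, 1] \<alpha> = of_nat (card (hook_fillings n \<alpha>))"
  by (simp only: e_sym_def hook_fillings_def)

lemma e_sym_hook_distinct:
  assumes "exps_distinct n S \<alpha>" "1 \<le> n"
  shows "e_sym [n - 1, 1] \<alpha> = of_nat n"
proof -
  have S: "finite S" "0 \<notin> S" "card S = n" "\<forall>i. \<alpha> i = (if i \<in> S then 1 else 0)"
    using assms(1) by (auto simp: exps_distinct_def)
  have "hook_fillings n \<alpha> = (\<lambda>s. [S - {s}, {s}]) ` S"
  proof (rule set_eqI, rule iffI)
    fix Ss assume "Ss \<in> hook_fillings n \<alpha>"
    then obtain T1 s where H: "Ss = [T1, {s}]" "finite T1" "0 \<notin> T1" "s \<noteq> 0" "card T1 = n - 1"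
       "\<forall>i. \<alpha> i = (if i \<in> T1 then 1 else 0) + (if i = s then 1 else 0)" unfolding hook_fillings_iff by blast
    have a1: "\<alpha> s = (if s \<in> T1 then 1 else 0) + 1" using H(6) by simp
    have a2: "\<alpha> s = (if s \<in> S then 1 else 0)" using S(4) by simp
    have s1: "s \<in> S"
    proof (rule ccontr)
      assume "s \<notin> S" then have "\<alpha> s = 0" using a2 by simp
      then show False using a1 by simp
    qed
    have s2: "s \<notin> T1"
    proof
      assume "s \<in> T1" then have "\<alpha> s = 2" using a1 by simp
      then show False using a2 by (cases "s \<in> S") simp_all
    qed
    have sS: "s \<in> S \<and> s \<notin> T1" using s1 s2 by simp
    have "T1 = S - {s}"
    proof (rule set_eqI)
      fix i show "i \<in> T1 \<longleftrightarrow> i \<in> S - {s}"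
      proof (cases "i = s")
        case True then show ?thesis using sS by simp
      next
        case False
        have b1: "\<alpha> i = (if i \<in> T1 then 1 else 0)" using H(6) False by simp
        have b2: "\<alpha> i = (if i \<in> S then 1 else 0)" using S(4) by simp
        show ?thesis using b1 b2 False by (cases "i \<in> T1"; cases "i \<in> S") simp_all
      qed
    qed
    then show "Ss \<in> (\<lambda>s. [S - {s}, {s}]) ` S" using H(1) sS by auto
  next
    fix Ss assume "Ss \<in> (\<lambda>s. [S - {s}, {s}]) ` S"
    then obtain s where s: "s \<in> S" "Ss = [S - {s}, {s}]" by auto
    show "Ss \<in> hook_fillings n \<alpha>" unfolding hook_fillings_iff
      using s S mem_zero_free_pos[OF s(1) S(2)] by (intro exI[of _ "S - {s}"] exI[of _ s]) auto
  qed
  moreover have "card ((\<lambda>s. [S - {s}, {s}]) ` S) = card S" by (rule card_image) (auto simp: inj_on_def)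
  ultimately show ?thesis using S(3) unfolding e_sym_hook_card by simp
qed

lemma e_sym_hook_repeat:
  assumes "exps_repeat n S d \<alpha>"
  shows "e_sym [n - 1, 1] \<alpha> = 1"
proof -
  have S: "finite S" "0 \<notin> S" "card S = n - 1" "d \<in> S"
    "\<forall>i. \<alpha> i = (if i \<in> S then 1 else 0) + (if i = d then 1 else 0)"
    using assms(1) by (auto simp: exps_repeat_def)
  have "hook_fillings n \<alpha> = {[S, {d}]}"
  proof (rule set_eqI, rule iffI)
    fix Ss assume "Ss \<in> hook_fillings n \<alpha>"
    then obtain T1 s where H: "Ss = [T1, {s}]" "finite T1" "0 \<notin> T1" "s \<noteq> 0" "card T1 = n - 1"
       "\<forall>i. \<alpha> i = (if i \<in> T1 then 1 else 0) + (if i = s then 1 else 0)" unfolding hook_fillings_iff by blast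
    have "\<alpha> d = 2" using S by simp
    moreover have "\<alpha> d = (if d \<in> T1 then 1 else 0) + (if d = s then 1 else 0)" using H(6) by blast
    ultimately have e: "(if d \<in> T1 then 1 else 0) + (if d = s then 1 else 0) = (2::nat)" by simp
    have ds: "d \<in> T1 \<and> s = d"
    proof (cases "d \<in> T1"; cases "d = s")
    qed (use e in simp_all)
    have "T1 = S"
    proof (rule set_eqI)
      fix i show "i \<in> T1 \<longleftrightarrow> i \<in> S"
      proof (cases "i = d")
        case True then show ?thesis using ds S(4) by simp
      next
        case False
        have b1: "\<alpha> i = (if i \<in> T1 then 1 else 0)" using H(6) False ds by simp
        have b2: "\<alpha> i = (if i \<in> S then 1 else 0)" using S(5) False by simp
        show ?thesis using b1 b2 by (cases "i \<in> T1"; cases "i \<in> S") simp_all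
      qed
    qed
    then show "Ss \<in> {[S, {d}]}" using H(1) ds by simp
  next
    fix Ss assume "Ss \<in> {[S, {d}]}"
    then have "Ss = [S, {d}]" by simp
    then have "Ss = [S, {d}] \<and> finite S \<and> 0 \<notin> S \<and> d \<noteq> 0 \<and> card S = n - 1 \<and>
     (\<forall>i. \<alpha> i = (if i \<in> S then 1 else 0) + (if i = d then 1 else 0))"
      using S(1,2,3,5) mem_zero_free_pos[OF S(4) S(2)] by blast
    then show "Ss \<in> hook_fillings n \<alpha>" unfolding hook_fillings_iff by blast
  qed
  then show ?thesis unfolding e_sym_hook_card by simp
qed

lemma e_sym_hook_other:
  assumes "\<not> (\<exists>S. exps_distinct n S \<alpha>)" "\<not> (\<exists>S d. exps_repeat n S d \<alpha>)" "1 \<le> n"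
  shows "e_sym [n - 1, 1] \<alpha> = 0"
proof -
  have "hook_fillings n \<alpha> = {}"
  proof (rule ccontr)
    assume "hook_fillings n \<alpha> \<noteq> {}"
    then obtain Ss where "Ss \<in> hook_fillings n \<alpha>" by auto
    then obtain T1 s where H: "Ss = [T1, {s}]" "finite T1" "0 \<notin> T1" "s \<noteq> 0" "card T1 = n - 1"
       "\<forall>i. \<alpha> i = (if i \<in> T1 then 1 else 0) + (if i = s then 1 else 0)" unfolding hook_fillings_iff by blast
    show False
    proof (cases "s \<in> T1")
      case True
      then have "exps_repeat n T1 s \<alpha>" using H by (auto simp: exps_repeat_def)
      then show False using assms(2) by blast
    next
      case False
      have c: "card (insert s T1) = n" using H(2,5) False assms(3) by simp
      have a: "\<forall>i. \<alpha> i = (if i \<in> insert s T1 then 1 else 0)"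
      proof
        fix i show "\<alpha> i = (if i \<in> insert s T1 then 1 else 0)"
          using H(6)[rule_format, of i] False by (cases "i = s"; cases "i \<in> T1") auto
      qed
      have "exps_distinct n (insert s T1) \<alpha>" unfolding exps_distinct_def using c a H(2,3,4) by simp
      then show False using assms(1) by blast
    qed
  qed
  then show ?thesis unfolding e_sym_hook_card by simp
qed

section \<open>Colourings with a prescribed monomial\<close>

definition colorings_with_exps :: "nat set \<Rightarrow> (nat \<Rightarrow> nat \<Rightarrow> bool) \<Rightarrow> (nat \<Rightarrow> nat) \<Rightarrow> (nat \<Rightarrow> nat) set" where
  "colorings_with_exps V E \<alpha> = {\<kappa>. proper_coloring V E \<kappa> \<and> (\<forall>i\<ge>1. card {v\<in>V. \<kappa> v = i} = \<alpha> i)}"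

lemma chrom_qsym_eq_sum: "chrom_qsym V E \<alpha> = (\<Sum>\<kappa>\<in>colorings_with_exps V E \<alpha>. monom 1 (asc V E \<kappa>))"
  unfolding chrom_qsym_def colorings_with_exps_def ..

lemma proper_coloring_clique_plus_inj_on:
  assumes "proper_coloring V (clique_plus_edge r) \<kappa>"
  shows "inj_on \<kappa> (V - {1})"
proof (rule inj_onI)
  have neq: "\<kappa> a \<noteq> \<kappa> b" if "a \<in> V - {1}" "b \<in> V - {1}" "a < b" for a b
    using assms that unfolding proper_coloring_def clique_plus_edge_def by blast
  fix a b assume "a \<in> V - {1}" "b \<in> V - {1}" "\<kappa> a = \<kappa> b"
  then show "a = b" using neq[of a b] neq[of b a] by (metis linorder_neq_iff)
qed

lemma card_fiber_remove_inj_on: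
  assumes "finite V" "p \<in> V" "inj_on \<kappa> (V - {p})"
  shows "card {v\<in>V. \<kappa> v = i} = (if \<kappa> p = i then 1 else 0) + (if i \<in> \<kappa> ` (V - {p}) then 1 else 0)"
proof -
  have "{v\<in>V. \<kappa> v = i} = (if \<kappa> p = i then {p} else {}) \<union> {w\<in>V - {p}. \<kappa> w = i}"
    using assms(2) by auto
  then have "card {v\<in>V. \<kappa> v = i} = (if \<kappa> p = i then 1 else 0) + card {w\<in>V - {p}. \<kappa> w = i}"
    using assms(1) by (simp add: card_Un_disjoint)
  then show ?thesis using card_fiber_inj_on[OF assms(3)] by simp
qed

lemma colorings_with_exps_clique_plus_iff:
  assumes "finite V" "1 \<in> V" "0 \<notin> V"
  shows "\<kappa> \<in> colorings_with_exps V (clique_plus_edge r) \<alpha> \<longleftrightarrow>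
    (\<forall>v. v \<notin> V \<longrightarrow> \<kappa> v = 0) \<and> 0 \<notin> \<kappa> ` V \<and> inj_on \<kappa> (V - {1})
    \<and> (\<forall>p\<in>V - {1}. p \<le> r \<longrightarrow> \<kappa> p \<noteq> \<kappa> 1)
    \<and> (\<forall>i\<ge>1. \<alpha> i = (if \<kappa> 1 = i then 1 else 0) + (if i \<in> \<kappa> ` (V - {1}) then 1 else 0))"
    (is "_ \<longleftrightarrow> ?zero \<and> ?pos \<and> ?inj \<and> ?adj \<and> ?exps")
proof
  assume "\<kappa> \<in> colorings_with_exps V (clique_plus_edge r) \<alpha>"
  then have pc: "proper_coloring V (clique_plus_edge r) \<kappa>"
    and cnt: "\<forall>i\<ge>1. card {v\<in>V. \<kappa> v = i} = \<alpha> i"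
    by (auto simp: colorings_with_exps_def)
  have inj: ?inj by (rule proper_coloring_clique_plus_inj_on[OF pc])
  have ?adj
  proof (intro ballI impI)
    fix p assume p: "p \<in> V - {1}" "p \<le> r"
    then have "1 < p" using assms(3) by (cases p) auto
    then have "\<kappa> 1 \<noteq> \<kappa> p"
      using pc p assms(2) unfolding proper_coloring_def clique_plus_edge_def by blast
    then show "\<kappa> p \<noteq> \<kappa> 1" by simp
  qed
  moreover have ?exps
    using cnt card_fiber_remove_inj_on[OF assms(1,2) inj] by simp
  moreover have ?zero ?pos
    using pc unfolding proper_coloring_def by (auto simp: image_iff)
  ultimately show "?zero \<and> ?pos \<and> ?inj \<and> ?adj \<and> ?exps" using inj by blast
next
  assume "?zero \<and> ?pos \<and> ?inj \<and> ?adj \<and> ?exps"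
  then have zero: ?zero and pos: ?pos and inj: ?inj and adj: ?adj and exps: ?exps
    by blast+
  have "proper_coloring V (clique_plus_edge r) \<kappa>"
    unfolding proper_coloring_def
  proof (intro conjI ballI allI impI)
    fix v assume "v \<in> V"
    then have "\<kappa> v \<noteq> 0" using pos by (metis image_eqI)
    then show "1 \<le> \<kappa> v" by simp
  next
    fix v assume "v \<notin> V"
    then show "\<kappa> v = 0" using zero by blast
  next
    fix i j assume ij: "i \<in> V" "j \<in> V" "i < j \<and> clique_plus_edge r i j"
    show "\<kappa> i \<noteq> \<kappa> j"
    proof (cases "i = 1")
      case True
      then have "j \<in> V - {1}" "j \<le> r" using ij by (auto simp: clique_plus_edge_def)
      then show ?thesis using adj True by auto
    next
      case False
      then have "i \<in> V - {1}" "j \<in> V - {1}" "i \<noteq> j" using ij assms(3) by auto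
      then show ?thesis using inj by (auto dest: inj_onD)
    qed
  qed
  then show "\<kappa> \<in> colorings_with_exps V (clique_plus_edge r) \<alpha>"
    using exps card_fiber_remove_inj_on[OF assms(1,2) inj] by (simp add: colorings_with_exps_def)
qed

lemma colorings_with_exps_clique_plusD:
  assumes "finite V" "1 \<in> V" "0 \<notin> V" "\<kappa> \<in> colorings_with_exps V (clique_plus_edge r) \<alpha>"
  shows "\<forall>v. v \<notin> V \<longrightarrow> \<kappa> v = 0" "0 \<notin> \<kappa> ` V" "inj_on \<kappa> (V - {1})"
    "\<forall>p\<in>V - {1}. p \<le> r \<longrightarrow> \<kappa> p \<noteq> \<kappa> 1"
    "\<forall>i\<ge>1. \<alpha> i = (if \<kappa> 1 = i then 1 else 0) + (if i \<in> \<kappa> ` (V - {1}) then 1 else 0)"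
  using assms(4) unfolding colorings_with_exps_clique_plus_iff[OF assms(1-3)] by blast+

lemma colorings_with_exps_clique_plusI:
  assumes "finite V" "1 \<in> V" "0 \<notin> V"
    and "\<forall>v. v \<notin> V \<longrightarrow> \<kappa> v = 0" "0 \<notin> \<kappa> ` V" "inj_on \<kappa> (V - {1})"
    "\<forall>p\<in>V - {1}. p \<le> r \<longrightarrow> \<kappa> p \<noteq> \<kappa> 1"
    "\<forall>i\<ge>1. \<alpha> i = (if \<kappa> 1 = i then 1 else 0) + (if i \<in> \<kappa> ` (V - {1}) then 1 else 0)"
  shows "\<kappa> \<in> colorings_with_exps V (clique_plus_edge r) \<alpha>"
  unfolding colorings_with_exps_clique_plus_iff[OF assms(1-3)] using assms(4-8) by blast

lemma colorings_clique_plus_distinct: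
  assumes "finite V" "1 \<in> V" "0 \<notin> V" "exps_distinct (card V) S \<alpha>"
  shows "colorings_with_exps V (clique_plus_edge r) \<alpha> = bij_colorings V S"
proof -
  have S0: "0 \<notin> S" and S_card: "card S = card V" and \<alpha>_S: "\<alpha> i = (if i \<in> S then 1 else 0)" for i
    using assms(4) by (auto simp: exps_distinct_def)
  have img_V: "\<kappa> ` V = insert (\<kappa> 1) (\<kappa> ` (V - {1}))" for \<kappa> :: "nat \<Rightarrow> nat"
    using assms(2) by (metis image_insert insert_Diff)
  show ?thesis
  proof (intro set_eqI iffI)
    fix \<kappa> assume "\<kappa> \<in> colorings_with_exps V (clique_plus_edge r) \<alpha>"
    note H = colorings_with_exps_clique_plusD[OF assms(1-3) this]
    have img: "\<kappa> ` V = S"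
    proof (intro set_eqI)
      fix i show "i \<in> \<kappa> ` V \<longleftrightarrow> i \<in> S"
      proof (cases "i = 0")
        case False
        then have "\<alpha> i = (if \<kappa> 1 = i then 1 else 0) + (if i \<in> \<kappa> ` (V - {1}) then 1 else 0)"
          using H(5) by simp
        then have "i \<in> \<kappa> ` V \<longleftrightarrow> \<alpha> i \<noteq> 0" unfolding img_V by simp
        then show ?thesis using \<alpha>_S[of i] by simp
      qed (use H(2) S0 in simp)
    qed
    moreover have "inj_on \<kappa> V" using assms(1) img S_card by (intro eq_card_imp_inj_on) simp_all
    ultimately show "\<kappa> \<in> bij_colorings V S" using H(1) by (simp add: bij_colorings_def bij_betw_def)
  next
    fix \<kappa> assume "\<kappa> \<in> bij_colorings V S"
    then have inj: "inj_on \<kappa> V" and img: "\<kappa> ` V = S" and zero: "\<forall>v. v \<notin> V \<longrightarrow> \<kappa> v = 0"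
      unfolding bij_colorings_def bij_betw_def by blast+
    have fresh: "\<kappa> 1 \<notin> \<kappa> ` (V - {1})" using inj assms(2) by (simp add: inj_on_image_set_diff)
    have adj: "\<forall>p\<in>V - {1}. p \<le> r \<longrightarrow> \<kappa> p \<noteq> \<kappa> 1"
    proof (intro ballI impI)
      fix p assume "p \<in> V - {1}"
      then have "\<kappa> p \<in> \<kappa> ` (V - {1})" by (rule imageI)
      then show "\<kappa> p \<noteq> \<kappa> 1" using fresh by auto
    qed
    have "S = insert (\<kappa> 1) (\<kappa> ` (V - {1}))" using img img_V[of \<kappa>] by simp
    then have exps: "\<forall>i\<ge>1. \<alpha> i = (if \<kappa> 1 = i then 1 else 0) + (if i \<in> \<kappa> ` (V - {1}) then 1 else 0)"
      using \<alpha>_S fresh by auto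
    have pos: "0 \<notin> \<kappa> ` V" using img S0 by simp
    have "inj_on \<kappa> (V - {1})" using inj by (rule inj_on_subset) auto
    then show "\<kappa> \<in> colorings_with_exps V (clique_plus_edge r) \<alpha>"
      by (rule colorings_with_exps_clique_plusI[OF assms(1-3) zero pos _ adj exps])
  qed
qed

lemma colorings_clique_plus_repeat_iff:
  assumes "finite V" "1 \<in> V" "0 \<notin> V" "exps_repeat (card V) S d \<alpha>"
  shows "\<kappa> \<in> colorings_with_exps V (clique_plus_edge r) \<alpha> \<longleftrightarrow>
    \<kappa> 1 = d \<and> bij_betw \<kappa> (V - {1}) S \<and> (\<forall>v. v \<notin> V \<longrightarrow> \<kappa> v = 0) \<and> (\<forall>p\<in>V - {1}. \<kappa> p = d \<longrightarrow> r < p)"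
proof -
  have S: "finite S" "0 \<notin> S" "card (V - {1}) = card S" "d \<in> S"
    using assms by (auto simp: exps_repeat_def)
  have \<alpha>_S: "\<alpha> i = (if i \<in> S then 1 else 0) + (if i = d then 1 else 0)" for i
    using assms(4) by (simp add: exps_repeat_def)
  show ?thesis
  proof
    assume "\<kappa> \<in> colorings_with_exps V (clique_plus_edge r) \<alpha>"
    note H = colorings_with_exps_clique_plusD[OF assms(1-3) this]
    have "\<kappa> ` (V - {1}) \<subseteq> S"
    proof
      fix i assume i: "i \<in> \<kappa> ` (V - {1})"
      then obtain v where "v \<in> V" "i = \<kappa> v" by blast
      then have "i \<noteq> 0" using H(2) by (metis image_eqI)
      then have "\<alpha> i \<noteq> 0" using H(5)[rule_format, of i] \<open>i \<in> \<kappa> ` (V - {1})\<close> by simp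
      then show "i \<in> S" using \<alpha>_S[of i] S(4) by (auto split: if_splits)
    qed
    moreover have "card (\<kappa> ` (V - {1})) = card S" using card_image[OF H(3)] S(3) by simp
    ultimately have img: "\<kappa> ` (V - {1}) = S" using S(1) by (simp add: card_subset_eq)
    have "\<kappa> 1 \<noteq> 0" using H(2) assms(2) by (metis image_eqI)
    then have "\<alpha> (\<kappa> 1) = 1 + (if \<kappa> 1 \<in> S then 1 else 0)"
      using H(5)[rule_format, of "\<kappa> 1"] img by simp
    then have "(if \<kappa> 1 = d then 1 else 0) = (1::nat)" using \<alpha>_S[of "\<kappa> 1"] by linarith
    then have d: "\<kappa> 1 = d" by (cases "\<kappa> 1 = d") simp_all
    have "\<forall>p\<in>V - {1}. \<kappa> p = d \<longrightarrow> r < p"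
    proof (intro ballI impI)
      fix p assume "p \<in> V - {1}" "\<kappa> p = d"
      then show "r < p" using H(4) d by (metis not_less)
    qed
    moreover have "bij_betw \<kappa> (V - {1}) S" using H(3) img by (simp add: bij_betw_def)
    ultimately show "\<kappa> 1 = d \<and> bij_betw \<kappa> (V - {1}) S \<and> (\<forall>v. v \<notin> V \<longrightarrow> \<kappa> v = 0) \<and> (\<forall>p\<in>V - {1}. \<kappa> p = d \<longrightarrow> r < p)"
      using d H(1) by simp
  next
    assume "\<kappa> 1 = d \<and> bij_betw \<kappa> (V - {1}) S \<and> (\<forall>v. v \<notin> V \<longrightarrow> \<kappa> v = 0) \<and> (\<forall>p\<in>V - {1}. \<kappa> p = d \<longrightarrow> r < p)"
    then have d: "\<kappa> 1 = d" and bij: "bij_betw \<kappa> (V - {1}) S" and zero: "\<forall>v. v \<notin> V \<longrightarrow> \<kappa> v = 0"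
      and far: "\<forall>p\<in>V - {1}. \<kappa> p = d \<longrightarrow> r < p"
      by simp_all
    from bij have img: "\<kappa> ` (V - {1}) = S" and inj: "inj_on \<kappa> (V - {1})"
      unfolding bij_betw_def by blast+
    have "\<kappa> ` V = insert d S" using assms(2) img d by (metis image_insert insert_Diff)
    then have pos: "0 \<notin> \<kappa> ` V" using S(2,4) by auto
    have adj: "\<forall>p\<in>V - {1}. p \<le> r \<longrightarrow> \<kappa> p \<noteq> \<kappa> 1" using far d by (auto simp: not_le)
    have exps: "\<forall>i\<ge>1. \<alpha> i = (if \<kappa> 1 = i then 1 else 0) + (if i \<in> \<kappa> ` (V - {1}) then 1 else 0)"
      using \<alpha>_S img d by auto
    show "\<kappa> \<in> colorings_with_exps V (clique_plus_edge r) \<alpha>"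
      by (rule colorings_with_exps_clique_plusI[OF assms(1-3) zero pos inj adj exps])
  qed
qed

lemma colorings_clique_plus_other:
  assumes "finite V" "1 \<in> V" "0 \<notin> V" "\<alpha> 0 = 0"
    and "\<not> (\<exists>S. exps_distinct (card V) S \<alpha>)" "\<not> (\<exists>S d. exps_repeat (card V) S d \<alpha>)"
  shows "colorings_with_exps V (clique_plus_edge r) \<alpha> = {}"
proof (rule ccontr)
  assume "colorings_with_exps V (clique_plus_edge r) \<alpha> \<noteq> {}"
  then obtain \<kappa> where "\<kappa> \<in> colorings_with_exps V (clique_plus_edge r) \<alpha>" by blast
  note H = colorings_with_exps_clique_plusD[OF assms(1-3) this]
  define T where "T = \<kappa> ` (V - {1})"
  have T: "finite T" "0 \<notin> T" "card T = card V - 1" "\<kappa> 1 \<noteq> 0"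
    using H(2,3) assms(1,2) card_image[OF H(3)] by (auto simp: T_def)
  have \<alpha>: "\<alpha> i = (if \<kappa> 1 = i then 1 else 0) + (if i \<in> T then 1 else 0)" for i
    using H(5) assms(4) T(2,4) unfolding T_def[symmetric] by (cases "i = 0") auto
  show False
  proof (cases "\<kappa> 1 \<in> T")
    case True
    then have "exps_repeat (card V) T (\<kappa> 1) \<alpha>" using T \<alpha> by (simp add: exps_repeat_def add.commute)
    then show False using assms(6) by blast
  next
    case False
    have "card V \<noteq> 0" using assms(1,2) by auto
    then have "exps_distinct (card V) (insert (\<kappa> 1) T) \<alpha>" using T \<alpha> False by (simp add: exps_distinct_def)
    then show False using assms(5) by blast
  qed
qed

lemma colorings_clique_plus_repeat:
  assumes "finite V" "1 \<in> V" "0 \<notin> V" "exps_repeat (card V) S d \<alpha>"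
  shows "colorings_with_exps V (clique_plus_edge r) \<alpha>
       = (\<lambda>\<kappa>. \<kappa>(1 := d)) ` {\<kappa>\<in>bij_colorings (V - {1}) S. \<forall>q\<in>V - {1}. \<kappa> q = d \<longrightarrow> r < q}"
proof (intro equalityI subsetI)
  fix \<kappa> assume "\<kappa> \<in> colorings_with_exps V (clique_plus_edge r) \<alpha>"
  then have \<kappa>: "\<kappa> 1 = d" "bij_betw \<kappa> (V - {1}) S" "\<forall>v. v \<notin> V \<longrightarrow> \<kappa> v = 0"
      "\<forall>p\<in>V - {1}. \<kappa> p = d \<longrightarrow> r < p"
    using colorings_clique_plus_repeat_iff[OF assms] by blast+
  from \<kappa>(2) have "bij_betw (\<kappa>(1 := 0)) (V - {1}) S"
    by (rule iffD1[OF bij_betw_cong, rotated]) auto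
  then have "\<kappa>(1 := 0) \<in> {\<kappa>\<in>bij_colorings (V - {1}) S. \<forall>q\<in>V - {1}. \<kappa> q = d \<longrightarrow> r < q}"
    using \<kappa>(3,4) by (auto simp: bij_colorings_def)
  moreover have "\<kappa> = (\<kappa>(1 := 0))(1 := d)" using \<kappa>(1) by auto
  ultimately show "\<kappa> \<in> (\<lambda>\<kappa>. \<kappa>(1 := d)) ` {\<kappa>\<in>bij_colorings (V - {1}) S. \<forall>q\<in>V - {1}. \<kappa> q = d \<longrightarrow> r < q}"
    by blast
next
  fix \<kappa> assume "\<kappa> \<in> (\<lambda>\<kappa>. \<kappa>(1 := d)) ` {\<kappa>\<in>bij_colorings (V - {1}) S. \<forall>q\<in>V - {1}. \<kappa> q = d \<longrightarrow> r < q}"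
  then obtain \<kappa>' where \<kappa>': "\<kappa>' \<in> bij_colorings (V - {1}) S" "\<forall>q\<in>V - {1}. \<kappa>' q = d \<longrightarrow> r < q"
    and \<kappa>: "\<kappa> = \<kappa>'(1 := d)" by blast
  have "bij_betw \<kappa>' (V - {1}) S" using \<kappa>'(1) by (simp add: bij_colorings_def)
  then have "bij_betw \<kappa> (V - {1}) S"
    unfolding \<kappa> by (rule iffD1[OF bij_betw_cong, rotated]) auto
  then show "\<kappa> \<in> colorings_with_exps V (clique_plus_edge r) \<alpha>"
    unfolding colorings_clique_plus_repeat_iff[OF assms]
    using \<kappa>' bij_colorings_out[OF \<kappa>'(1)] assms(2) by (auto simp: \<kappa>)
qed

lemma chrom_qsym_clique_plus_distinct:
  assumes "finite V" "0 \<notin> V" "1 \<in> V" "exps_distinct (card V) S \<alpha>"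
  shows "chrom_qsym V (clique_plus_edge r) \<alpha> = gf_distinct (card V - 1) (card {w\<in>V - {1}. w \<le> r})"
proof -
  have "finite S" "card S = card V" using assms(4) by (auto simp: exps_distinct_def)
  then show ?thesis
    unfolding chrom_qsym_eq_sum colorings_clique_plus_distinct[OF assms(1,3,2,4)]
    by (rule sum_monom_asc_clique_plus_distinct[OF assms(1-3)])
qed

lemma chrom_qsym_clique_plus_repeat:
  assumes "finite V" "0 \<notin> V" "1 \<in> V" "exps_repeat (card V) S d \<alpha>"
  shows "chrom_qsym V (clique_plus_edge r) \<alpha> = gf_repeat (card V - 1) (card {w\<in>V - {1}. w \<le> r})"
proof -
  define A where "A = {\<kappa>\<in>bij_colorings (V - {1}) S. \<forall>q\<in>V - {1}. \<kappa> q = d \<longrightarrow> r < q}"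
  have inj: "inj_on (\<lambda>\<kappa>. \<kappa>(1 := d)) A"
  proof (rule inj_onI)
    fix \<kappa>1 \<kappa>2 assume "\<kappa>1 \<in> A" "\<kappa>2 \<in> A" and eq: "\<kappa>1(1 := d) = \<kappa>2(1 := d)"
    then have "\<kappa>1 1 = 0" "\<kappa>2 1 = 0" using bij_colorings_out by (auto simp: A_def)
    then show "\<kappa>1 = \<kappa>2" using eq by (metis fun_upd_triv fun_upd_upd)
  qed
  have S: "finite S" "card S = card (V - {1})" "d \<in> S"
    using assms(1,3,4) by (auto simp: exps_repeat_def)
  have "insert 1 (V - {1}) = V" using assms(3) by auto
  then have "chrom_qsym V (clique_plus_edge r) \<alpha> = gf_repeat (card (V - {1})) (card {w\<in>V - {1}. w \<le> r})"
    unfolding chrom_qsym_eq_sum colorings_clique_plus_repeat[OF assms(1,3,2,4)] A_def[symmetric]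
      sum.reindex[OF inj]
    using sum_monom_asc_clique_plus_repeat[of "V - {1}" S d r] assms(1,2) S by (simp add: A_def)
  then show ?thesis using assms(1,3) by simp
qed

lemma chrom_qsym_clique_plus_other:
  assumes "finite V" "1 \<in> V" "0 \<notin> V" "\<alpha> 0 = 0"
    and "\<not> (\<exists>S. exps_distinct (card V) S \<alpha>)" "\<not> (\<exists>S d. exps_repeat (card V) S d \<alpha>)"
  shows "chrom_qsym V (clique_plus_edge r) \<alpha> = 0"
  unfolding chrom_qsym_eq_sum colorings_clique_plus_other[OF assms] by simp

lemma gf_distinct_eq:
  assumes "2 \<le> n" "1 \<le> r" "r \<le> n - 1"
  shows "gf_distinct (n - 1) (r - 1)
       = qfact (n - 2) * (qint n * qint (r - 1) + monom 1 (r - 1) * qint (n - r) * of_nat n)"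
proof -
  have "qint (n - 1) = qint (r - 1) + monom 1 (r - 1) * qint (n - r)"
    using qint_add[of "r - 1" "n - r"] assms by simp
  moreover have "qfact (n - 1) = qfact (n - 2) * qint (n - 1)"
    using qfact_Suc[of "n - 2"] assms(1) by (simp add: Suc_diff_Suc numeral_2_eq_2)
  moreover have "n - 1 + 1 = n" "n - 1 - 1 = n - 2" using assms(1) by simp_all
  ultimately show ?thesis unfolding gf_distinct_def by (simp add: algebra_simps)
qed

lemma gf_repeat_eq:
  assumes "1 \<le> r"
  shows "gf_repeat (n - 1) (r - 1) = qfact (n - 2) * (monom 1 (r - 1) * qint (n - r))"
  using assms by (simp add: gf_repeat_def mult.assoc numeral_2_eq_2)

lemma nuio_edge_eq_clique_plus_edge:
  assumes "m 1 = r" "\<forall>i. 2 \<le> i \<and> i \<le> n - 1 \<longrightarrow> m i = n" "i \<in> {1..n}" "j \<in> {1..n}" "i < j"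
  shows "nuio_edge m i j \<longleftrightarrow> clique_plus_edge r i j"
proof (cases "i = 1")
  case False
  then have "m i = n" using assms(2-5) by auto
  then show ?thesis using False assms(4,5) by (simp add: nuio_edge_def clique_plus_edge_def)
qed (use assms(1) in \<open>simp add: nuio_edge_def clique_plus_edge_def\<close>)

lemma exps_distinct_not_repeat:
  assumes "exps_distinct n S \<alpha>"
  shows "\<not> exps_repeat n S' d \<alpha>"
proof
  assume "exps_repeat n S' d \<alpha>"
  then have "\<alpha> d = 2" by (simp add: exps_repeat_def)
  moreover have "\<alpha> d \<le> 1" using assms by (simp add: exps_distinct_def)
  ultimately show False by simp
qed

lemma chrom_qsym_clique_plus_interval:
  assumes "2 \<le> n" "1 \<le> r" "r \<le> n - 1" "\<alpha> 0 = 0"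
  shows "chrom_qsym {1..n} (clique_plus_edge r) \<alpha> =
      qfact (n - 2) * (qint n * qint (r - 1) * e_sym [n] \<alpha>
                       + monom 1 (r - 1) * qint (n - r) * e_sym [n - 1, 1] \<alpha>)"
proof -
  have V: "finite {1..n}" "0 \<notin> {1..n}" "1 \<in> {1..n}" "card {1..n} = n"
    using assms(1) by auto
  have "{w\<in>{1..n} - {1}. w \<le> r} = {2..r}" using assms(3) by auto
  then have deg: "card {w\<in>{1..n} - {1}. w \<le> r} = r - 1" by simp
  consider (distinct) S where "exps_distinct n S \<alpha>"
    | (repeat) S d where "exps_repeat n S d \<alpha>"
    | (other) "\<not> (\<exists>S. exps_distinct n S \<alpha>)" "\<not> (\<exists>S d. exps_repeat n S d \<alpha>)"
    by blast
  then show ?thesis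
  proof cases
    case distinct
    then show ?thesis
      using chrom_qsym_clique_plus_distinct[OF V(1-3), where r = r, unfolded V(4) deg, OF distinct]
        gf_distinct_eq[OF assms(1-3)] e_sym_single[of n \<alpha>] e_sym_hook_distinct[OF distinct] assms(1)
      by auto
  next
    case repeat
    then show ?thesis
      using chrom_qsym_clique_plus_repeat[OF V(1-3), where r = r, unfolded V(4) deg, OF repeat]
        gf_repeat_eq[OF assms(2)] e_sym_single[of n \<alpha>] e_sym_hook_repeat[OF repeat]
        exps_distinct_not_repeat
      by auto
  next
    case other
    then show ?thesis
      using chrom_qsym_clique_plus_other[where \<alpha> = \<alpha> and r = r, OF V(1,3,2) assms(4),
          unfolded V(4), OF other]
        e_sym_single[of n \<alpha>] e_sym_hook_other[OF other] assms(1)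
      by simp
  qed
qed

theorem corollary4p3:
  fixes n r :: nat and m :: "nat \<Rightarrow> nat"
  assumes "2 \<le> n" and "1 \<le> r" and "r \<le> n - 1" and "m 1 = r"
    and "\<forall>i. 2 \<le> i \<and> i \<le> n - 1 \<longrightarrow> m i = n"
  shows "\<forall>\<alpha>\<in>monomial_exps.
    chrom_qsym {1..n} (nuio_edge m) \<alpha> =
      qfact (n - 2) * (qint n * qint (r - 1) * e_sym [n] \<alpha>
                       + monom 1 (r - 1) * qint (n - r) * e_sym [n - 1, 1] \<alpha>)"
proof
  fix \<alpha> assume "\<alpha> \<in> monomial_exps"
  then have "\<alpha> 0 = 0" by (simp add: monomial_exps_def)
  moreover have "chrom_qsym {1..n} (nuio_edge m) \<alpha> = chrom_qsym {1..n} (clique_plus_edge r) \<alpha>"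
    using nuio_edge_eq_clique_plus_edge[OF assms(4,5)] by (intro chrom_qsym_cong) blast
  ultimately show "chrom_qsym {1..n} (nuio_edge m) \<alpha> =
      qfact (n - 2) * (qint n * qint (r - 1) * e_sym [n] \<alpha>
                       + monom 1 (r - 1) * qint (n - r) * e_sym [n - 1, 1] \<alpha>)"
    using chrom_qsym_clique_plus_interval[OF assms(1-3)] by simp
qed

end
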